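(* Consider the Hubbard model described in the context on a finite connected lattice $\mathcal{M}$ with uniform coordination number $\zeta$, and suppose that the electron number is $N_e=|\mathcal{M}|$. Then, in the limits $U\uparrow\infty$ and $s\uparrow\infty$, the ground states of the model have total spin $S_{\mathrm{tot}}=S_{\max}=N_e/2$, and they are unique up to the trivial $(2S_{\max}+1)$-fold degeneracy.
   Context: Lattice: $\mathcal{M}$ is a finite set of sites. $\mathcal{B}$ is a set of ordered pairs $(x,y)$ of distinct sites of $\mathcal{M}$ (bonds) such that for any $x,y$ at most one of $(x,y),(y,x)$ lies in $\mathcal{B}$. Put $\mathcal{E}=\mathcal{B}\cup\{(y,x):(x,y)\in\mathcal{B}\}$. We assume $\mathcal{M}$ is connected via the bonds in $\mathcal{B}$, and that every $x\in\mathcal{M}$ has exactly $\zeta$ sites $y$ with $(x,y)\in\mathcal{E}$. For each $(x,y)\in\mathcal{B}$ introduce two additional sites $u(x,y)$ and $\bar u(x,y)$; let $\mathcal{O}$ and $\bar{\mathcal{O}}$ be the sets of all $u(x,y)$ and all $\bar u(x,y)$ respectively, and let $\Lambda=\mathcal{M}\cup\mathcal{O}\cup\bar{\mathcal{O}}$. Operators: $c_{z,\sigma}$ ($z\in\Lambda$, $\sigma\in\{\uparrow,\downarrow\}$) are the standard fermion annihilation operators, $n_{z,\sigma}=c^\dagger_{z,\sigma}c_{z,\sigma}$, and $|\Phi_{\mathrm{vac}}\rangle$ is the vacuum. Fix $\mu>0$. For $x\in\mathcal{M}$, $a_{x,\sigma}=(1+2\zeta\mu^2)^{-1/2}\{c_{x,\sigma}+\mu\sum_{y:(x,y)\in\mathcal{B}}(c_{u(x,y),\sigma}-c_{\bar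 u(x,y),\sigma})+\mu\sum_{y:(y,x)\in\mathcal{B}}(c_{u(y,x),\sigma}+c_{\bar u(y,x),\sigma})\}$. For $u=u(x,y)\in\mathcal{O}$, $b_{u,\sigma}=c_{u,\sigma}-\mu(c_{x,\sigma}+c_{y,\sigma})$; for $\bar u=\bar u(x,y)\in\bar{\mathcal{O}}$, $b_{\bar u,\sigma}=c_{\bar u,\sigma}+\mu(c_{x,\sigma}-c_{y,\sigma})$. Hamiltonian, with parameters $s,t,U>0$: $H=t\sum_{(x,y)\in\mathcal{E},\sigma}a^\dagger_{x,\sigma}a_{y,\sigma}+s\sum_{v\in\mathcal{O}\cup\bar{\mathcal{O}},\sigma}b^\dagger_{v,\sigma}b_{v,\sigma}+U\sum_{z\in\Lambda}n_{z,\uparrow}n_{z,\downarrow}$. It acts on the Hilbert space with fixed electron number $N_e\le|\mathcal{M}|$. Spin: $S^+_z=c^\dagger_{z,\uparrow}c_{z,\downarrow}$, $S^-_z=c^\dagger_{z,\downarrow}c_{z,\uparrow}$, $S^{(3)}_z=\tfrac12(n_{z,\uparrow}-n_{z,\downarrow})$, $S^{(1)}_z=(S^+_z+S^-_z)/2$, $S^{(2)}_z=(S^+_z-S^-_z)/(2i)$. The total spin is $\mathbf{S}_{\mathrm{tot}}=\sum_{z\in\Lambda}\mathbf{S}_z$, the eigenvalues of $(\mathbf{S}_{\mathrm{tot}})^2$ are written $S_{\mathrm{tot}}(S_{\mathrm{tot}}+1)$, and $S_{\max}=N_e/2$. Ground states in the limits: a fixed state $|\Phi\rangle$ (independent of $s,U$)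 is a finite-energy state if $\lim_{s\uparrow\infty}\lim_{U\uparrow\infty}\langle\Phi|H|\Phi\rangle<\infty$. The ground states in the limits $U\uparrow\infty$, $s\uparrow\infty$ are the normalized $N_e$-electron states minimizing this limiting energy. *)

theory Defs
  imports Complex_Main "HOL-Library.Product_Lexorder"
begin

datatype 'a site = MS 'a | OS 'a 'a | OB 'a 'a
  (* MS x = site x of M;  OS x y = u(x,y);  OB x y = u-bar(x,y) *)

type_synonym 'a mode = "'a site \<times> bool"   (* spin: True = up, False = down *)

(* Fock space vectors: coefficients w.r.t. the occupation-number basis |S>,
   S a (finite) set of occupied modes, ordered by mode_key. *)
type_synonym 'a vec = "'a mode set \<Rightarrow> complex"

definition Edg :: "('a \<times> 'a) set \<Rightarrow> ('a \<times> 'a) set" where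
  "Edg B = B \<union> converse B"

definition Osites :: "('a \<times> 'a) set \<Rightarrow> 'a site set" where
  "Osites B = (\<lambda>(x,y). OS x y) ` B"

definition OBsites :: "('a \<times> 'a) set \<Rightarrow> 'a site set" where
  "OBsites B = (\<lambda>(x,y). OB x y) ` B"

definition Lam :: "'a set \<Rightarrow> ('a \<times> 'a) set \<Rightarrow> 'a site set" where
  "Lam M B = MS ` M \<union> Osites B \<union> OBsites B"

definition modes :: "'a set \<Rightarrow> ('a \<times> 'a) set \<Rightarrow> 'a mode set" where
  "modes M B = Lam M B \<times> UNIV"

fun site_key :: "'a site \<Rightarrow> nat \<times> 'a \<times> 'a" where
  "site_key (MS x) = (0, x, x)"
| "site_key (OS x y) = (1, x, y)"
| "site_key (OB x y) = (2, x, y)"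

definition mode_key :: "'a mode \<Rightarrow> (nat \<times> 'a \<times> 'a) \<times> bool" where
  "mode_key m = (site_key (fst m), snd m)"

definition fsign :: "'a::linorder mode set \<Rightarrow> 'a mode \<Rightarrow> complex" where
  "fsign S m = (-1) ^ card {m' \<in> S. mode_key m' < mode_key m}"

definition ann :: "'a::linorder mode \<Rightarrow> 'a vec \<Rightarrow> 'a vec" where
  "ann m \<psi> = (\<lambda>S. if m \<in> S then 0 else fsign S m * \<psi> (insert m S))"

definition cre :: "'a::linorder mode \<Rightarrow> 'a vec \<Rightarrow> 'a vec" where
  "cre m \<psi> = (\<lambda>S. if m \<in> S then fsign (S - {m}) m * \<psi> (S - {m}) else 0)"

definition nop :: "'a::linorder mode \<Rightarrow> 'a vec \<Rightarrow> 'a vec" where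
  "nop m \<psi> = cre m (ann m \<psi>)"

definition annL :: "'a set \<Rightarrow> ('a \<times> 'a) set \<Rightarrow> ('a site \<Rightarrow> complex) \<Rightarrow> bool \<Rightarrow> 'a::linorder vec \<Rightarrow> 'a vec" where
  "annL M B w \<sigma> \<psi> = (\<lambda>S. \<Sum>z\<in>Lam M B. w z * ann (z, \<sigma>) \<psi> S)"

definition creL :: "'a set \<Rightarrow> ('a \<times> 'a) set \<Rightarrow> ('a site \<Rightarrow> complex) \<Rightarrow> bool \<Rightarrow> 'a::linorder vec \<Rightarrow> 'a vec" where
  "creL M B w \<sigma> \<psi> = (\<lambda>S. \<Sum>z\<in>Lam M B. cnj (w z) * cre (z, \<sigma>) \<psi> S)"

section \<open>The operators a_x and b_v (coefficient functions)\<close>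

definition acoef :: "('a \<times> 'a) set \<Rightarrow> nat \<Rightarrow> real \<Rightarrow> 'a \<Rightarrow> 'a site \<Rightarrow> complex" where
  "acoef B zeta mu x z = complex_of_real (1 / sqrt (1 + 2 * real zeta * mu\<^sup>2)) *
     (case z of
        MS y \<Rightarrow> (if y = x then 1 else 0)
      | OS p q \<Rightarrow> (if (p,q) \<in> B \<and> (p = x \<or> q = x) then complex_of_real mu else 0)
      | OB p q \<Rightarrow> (if (p,q) \<in> B \<and> p = x then - complex_of_real mu
                  else if (p,q) \<in> B \<and> q = x then complex_of_real mu else 0))"

definition bcoef :: "real \<Rightarrow> 'a site \<Rightarrow> 'a site \<Rightarrow> complex" where
  "bcoef mu v z =
     (case v of
        MS _ \<Rightarrow> 0
      | OS x y \<Rightarrow> (case z of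
                     OS p q \<Rightarrow> (if p = x \<and> q = y then 1 else 0)
                   | MS p \<Rightarrow> (if p = x \<or> p = y then - complex_of_real mu else 0)
                   | OB _ _ \<Rightarrow> 0)
      | OB x y \<Rightarrow> (case z of
                     OB p q \<Rightarrow> (if p = x \<and> q = y then 1 else 0)
                   | MS p \<Rightarrow> (if p = x then complex_of_real mu
                              else if p = y then - complex_of_real mu else 0)
                   | OS _ _ \<Rightarrow> 0))"

definition ham :: "'a::linorder set \<Rightarrow> ('a \<times> 'a) set \<Rightarrow> nat \<Rightarrow> real \<Rightarrow> real \<Rightarrow> real \<Rightarrow> real \<Rightarrow> 'a vec \<Rightarrow> 'a vec" where
  "ham M B zeta mu t s U \<psi> = (\<lambda>S.
      complex_of_real t * (\<Sum>(x,y)\<in>Edg B. \<Sum>\<sigma>\<in>(UNIV::bool set).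
          creL M B (acoef B zeta mu x) \<sigma> (annL M B (acoef B zeta mu y) \<sigma> \<psi>) S)
    + complex_of_real s * (\<Sum>v\<in>Osites B \<union> OBsites B. \<Sum>\<sigma>\<in>(UNIV::bool set).
          creL M B (bcoef mu v) \<sigma> (annL M B (bcoef mu v) \<sigma> \<psi>) S)
    + complex_of_real U * (\<Sum>z\<in>Lam M B. nop (z, True) (nop (z, False) \<psi>) S))"

definition inner_F :: "'a set \<Rightarrow> ('a \<times> 'a) set \<Rightarrow> 'a vec \<Rightarrow> 'a vec \<Rightarrow> complex" where
  "inner_F M B \<phi> \<psi> = (\<Sum>S\<in>Pow (modes M B). cnj (\<phi> S) * \<psi> S)"

definition Ne_space :: "'a set \<Rightarrow> ('a \<times> 'a) set \<Rightarrow> nat \<Rightarrow> 'a vec \<Rightarrow> bool" where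
  "Ne_space M B N \<psi> \<longleftrightarrow> (\<forall>S. \<psi> S \<noteq> 0 \<longrightarrow> S \<subseteq> modes M B \<and> card S = N)"

definition energy :: "'a::linorder set \<Rightarrow> ('a \<times> 'a) set \<Rightarrow> nat \<Rightarrow> real \<Rightarrow> real \<Rightarrow> real \<Rightarrow> real \<Rightarrow> 'a vec \<Rightarrow> real" where
  "energy M B zeta mu t s U \<Phi> = Re (inner_F M B \<Phi> (ham M B zeta mu t s U \<Phi>))"

definition lim_energy_is :: "'a::linorder set \<Rightarrow> ('a \<times> 'a) set \<Rightarrow> nat \<Rightarrow> real \<Rightarrow> real \<Rightarrow> 'a vec \<Rightarrow> real \<Rightarrow> bool" where
  "lim_energy_is M B zeta mu t \<Phi> E \<longleftrightarrow>
     (\<exists>g. (\<forall>\<^sub>F s in at_top. ((\<lambda>U. energy M B zeta mu t s U \<Phi>) \<longlongrightarrow> g s) at_top)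
          \<and> (g \<longlongrightarrow> E) at_top)"

definition finite_energy :: "'a::linorder set \<Rightarrow> ('a \<times> 'a) set \<Rightarrow> nat \<Rightarrow> real \<Rightarrow> real \<Rightarrow> 'a vec \<Rightarrow> bool" where
  "finite_energy M B zeta mu t \<Phi> \<longleftrightarrow> (\<exists>E. lim_energy_is M B zeta mu t \<Phi> E)"

definition lim_energy :: "'a::linorder set \<Rightarrow> ('a \<times> 'a) set \<Rightarrow> nat \<Rightarrow> real \<Rightarrow> real \<Rightarrow> 'a vec \<Rightarrow> real" where
  "lim_energy M B zeta mu t \<Phi> = (THE E. lim_energy_is M B zeta mu t \<Phi> E)"

definition ground_state :: "'a::linorder set \<Rightarrow> ('a \<times> 'a) set \<Rightarrow> nat \<Rightarrow> real \<Rightarrow> real \<Rightarrow> nat \<Rightarrow> 'a vec \<Rightarrow> bool" where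
  "ground_state M B zeta mu t N \<Phi> \<longleftrightarrow>
     Ne_space M B N \<Phi> \<and> inner_F M B \<Phi> \<Phi> = 1 \<and> finite_energy M B zeta mu t \<Phi> \<and>
     (\<forall>\<Psi>. Ne_space M B N \<Psi> \<and> inner_F M B \<Psi> \<Psi> = 1 \<and> finite_energy M B zeta mu t \<Psi>
            \<longrightarrow> lim_energy M B zeta mu t \<Phi> \<le> lim_energy M B zeta mu t \<Psi>)"

definition Splus :: "'a::linorder site \<Rightarrow> 'a vec \<Rightarrow> 'a vec" where
  "Splus z \<psi> = cre (z, True) (ann (z, False) \<psi>)"

definition Sminus :: "'a::linorder site \<Rightarrow> 'a vec \<Rightarrow> 'a vec" where
  "Sminus z \<psi> = cre (z, False) (ann (z, True) \<psi>)"

definition S1 :: "'a::linorder site \<Rightarrow> 'a vec \<Rightarrow> 'a vec" where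
  "S1 z \<psi> = (\<lambda>S. (Splus z \<psi> S + Sminus z \<psi> S) / 2)"

definition S2 :: "'a::linorder site \<Rightarrow> 'a vec \<Rightarrow> 'a vec" where
  "S2 z \<psi> = (\<lambda>S. (Splus z \<psi> S - Sminus z \<psi> S) / (2 * \<i>))"

definition S3 :: "'a::linorder site \<Rightarrow> 'a vec \<Rightarrow> 'a vec" where
  "S3 z \<psi> = (\<lambda>S. (nop (z, True) \<psi> S - nop (z, False) \<psi> S) / 2)"

definition Stot :: "'a set \<Rightarrow> ('a \<times> 'a) set \<Rightarrow> ('a::linorder site \<Rightarrow> 'a vec \<Rightarrow> 'a vec) \<Rightarrow> 'a vec \<Rightarrow> 'a vec" where
  "Stot M B Sop \<psi> = (\<lambda>S. \<Sum>z\<in>Lam M B. Sop z \<psi> S)"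

definition Stot_sq :: "'a::linorder set \<Rightarrow> ('a \<times> 'a) set \<Rightarrow> 'a vec \<Rightarrow> 'a vec" where
  "Stot_sq M B \<psi> = (\<lambda>S. Stot M B S1 (Stot M B S1 \<psi>) S + Stot M B S2 (Stot M B S2 \<psi>) S
                        + Stot M B S3 (Stot M B S3 \<psi>) S)"

end

theory Submission
  imports Defs
begin

text \<open>In the limits \<open>U \<rightarrow> \<infinity>\<close>, \<open>s \<rightarrow> \<infinity>\<close> a state has finite energy iff no site is doubly
  occupied and every \<open>b\<^sub>v\<^sub>\<sigma>\<close> annihilates it; what remains is the hopping energy. For
  \<open>N\<^sub>e = |\<M>|\<close> electrons the relations \<open>b\<^sub>v\<^sub>\<sigma> \<Phi> = 0\<close> express every amplitude through those
  of configurations with one electron on each site of \<open>\<M>\<close>; combined with the exclusion of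
  double occupancy on \<open>u(x,y)\<close>, they show that such an amplitude vanishes as soon as the one with
  the spins at \<open>x\<close> and \<open>y\<close> exchanged does. By connectivity the amplitudes of all configurations
  with the same number of down spins vanish together, so the finite-energy space is spanned by the
  \<open>|\<M>| + 1\<close> states \<open>(S\<^sup>-\<^sub>tot)\<^sup>k \<Prod>\<^sub>x a\<^sup>\<dagger>\<^sub>x\<^sub>\<up> |vac\<rangle>\<close>. Since the \<open>a\<^sub>x\<close> are mutually
  orthogonal and orthogonal to the \<open>b\<^sub>v\<close>, the hopping term annihilates these states: every
  finite-energy state is a ground state, and has total spin \<open>S\<^sub>max\<close>.\<close>

section \<open>Canonical anticommutation relations\<close>

lemma site_key_inject: "site_key z = site_key z' \<Longrightarrow> z = z'"
  by (cases z; cases z') auto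

lemma mode_key_inject: "mode_key m = mode_key m' \<Longrightarrow> m = m'"
  unfolding mode_key_def by (cases m; cases m') (auto dest: site_key_inject)

text \<open>The Jordan--Wigner sign is meaningless on infinite mode sets (\<open>card\<close> of an infinite set
  is \<open>0\<close>), so the anticommutation relations only hold for vectors vanishing there.\<close>

definition fin_supp :: "'a vec \<Rightarrow> bool" where
  "fin_supp \<psi> \<longleftrightarrow> (\<forall>S. infinite S \<longrightarrow> \<psi> S = 0)"

lemma fsign_square [simp]: "fsign S m * fsign S m = 1"
  by (simp add: fsign_def power_mult_distrib[symmetric])

lemma fsign_nonzero [simp]: "fsign S m \<noteq> 0"
  by (simp add: fsign_def)

lemma cnj_fsign [simp]: "cnj (fsign S m) = fsign S m"
  by (simp add: fsign_def)

lemma fsign_insert: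
  assumes "finite S" "m' \<notin> S"
  shows "fsign (insert m' S) m = (if mode_key m' < mode_key m then -1 else 1) * fsign S m"
proof -
  have "{m''\<in>insert m' S. mode_key m'' < mode_key m} =
    (if mode_key m' < mode_key m then insert m' {m''\<in>S. mode_key m'' < mode_key m}
     else {m''\<in>S. mode_key m'' < mode_key m})" by auto
  then show ?thesis using assms by (simp add: fsign_def)
qed

lemma mode_key_cases:
  fixes a b :: "'a::linorder mode"
  assumes "a \<noteq> b" obtains "mode_key a < mode_key b" | "mode_key b < mode_key a"
  using mode_key_inject assms by (metis linorder_neqE)

lemma fsign_swap:
  assumes "finite S" "a \<notin> S" "b \<notin> S" "a \<noteq> b"
  shows "fsign S a * fsign (insert a S) b = - (fsign S b * fsign (insert b S) a)"
  using assms by (cases rule: mode_key_cases[OF assms(4)]) (auto simp: fsign_insert)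

lemma fsign_insert_swap:
  assumes "finite S" "a \<notin> S" "b \<notin> S" "a \<noteq> b"
  shows "fsign (insert a S) b * fsign (insert b S) a = - (fsign S a * fsign S b)"
  using assms by (cases rule: mode_key_cases[OF assms(4)]) (auto simp: fsign_insert)

lemma fin_supp_ann: "fin_supp \<psi> \<Longrightarrow> fin_supp (ann a \<psi>)"
  by (simp add: fin_supp_def ann_def)

lemma ann_anticomm:
  assumes "fin_supp \<psi>"
  shows "ann a (ann b \<psi>) S = - ann b (ann a \<psi>) S"
proof (cases "a = b \<or> infinite S")
  case True
  then show ?thesis using assms by (auto simp: ann_def fin_supp_def)
next
  case False
  then show ?thesis using fsign_swap[of S a b]
    by (auto simp: ann_def insert_commute mult.assoc[symmetric])
qed

lemma cre_anticomm:
  assumes "fin_supp \<psi>"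
  shows "cre a (cre b \<psi>) S = - cre b (cre a \<psi>) S"
proof (cases "a = b \<or> infinite S \<or> a \<notin> S \<or> b \<notin> S")
  case True
  then show ?thesis using assms by (auto simp: cre_def fin_supp_def)
next
  case False
  define T where "T = S - {a} - {b}"
  have "finite T" "a \<notin> T" "b \<notin> T" using False by (auto simp: T_def)
  moreover have "S - {a} = insert b T" "S - {b} = insert a T" "S - {a} - {b} = T" "S - {b} - {a} = T"
    using False by (auto simp: T_def)
  ultimately show ?thesis using fsign_swap[of T a b] False
    by (simp add: cre_def algebra_simps)
qed

lemma ann_cre_anticomm:
  assumes "fin_supp \<psi>"
  shows "ann a (cre b \<psi>) S = (if a = b then \<psi> S else 0) - cre b (ann a \<psi>) S"
proof (cases "a = b \<or> infinite S \<or> a \<in> S \<or> b \<notin> S")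
  case True
  then show ?thesis using assms by (auto simp: ann_def cre_def insert_absorb fin_supp_def)
next
  case False
  define T where "T = S - {b}"
  have T: "finite T" "a \<notin> T" "b \<notin> T" "S = insert b T" "insert a S - {b} = insert a T"
    using False by (auto simp: T_def)
  then have "fsign (insert b T) a * fsign (insert a T) b = - (fsign T b * fsign T a)"
    using fsign_insert_swap[of T a b] False by (simp add: mult.commute)
  then show ?thesis using False T by (simp add: cre_def ann_def mult.assoc[symmetric])
qed

lemma nop_apply: "nop m \<psi> S = (if m \<in> S then \<psi> S else 0)"
  by (auto simp: nop_def cre_def ann_def insert_absorb)

lemma ann_eq_0_iff: "m \<notin> S \<Longrightarrow> ann m \<Phi> S = 0 \<longleftrightarrow> \<Phi> (insert m S) = 0"
  by (simp add: ann_def)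

lemma ann_add [simp]: "ann m (\<lambda>S. f S + g S) = (\<lambda>S. ann m f S + ann m g S)"
  and ann_diff [simp]: "ann m (\<lambda>S. f S - g S) = (\<lambda>S. ann m f S - ann m g S)"
  and ann_uminus [simp]: "ann m (\<lambda>S. - f S) = (\<lambda>S. - ann m f S)"
  and ann_cmult [simp]: "ann m (\<lambda>S. c * f S) = (\<lambda>S. c * ann m f S)"
  and ann_zero [simp]: "ann m (\<lambda>S. 0) = (\<lambda>S. 0)"
  and ann_sum [simp]: "ann m (\<lambda>S. \<Sum>i\<in>I. h i S) = (\<lambda>S. \<Sum>i\<in>I. ann m (h i) S)"
  by (auto simp: ann_def fun_eq_iff algebra_simps sum_distrib_left)

lemma cre_add [simp]: "cre m (\<lambda>S. f S + g S) = (\<lambda>S. cre m f S + cre m g S)"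
  and cre_diff [simp]: "cre m (\<lambda>S. f S - g S) = (\<lambda>S. cre m f S - cre m g S)"
  and cre_uminus [simp]: "cre m (\<lambda>S. - f S) = (\<lambda>S. - cre m f S)"
  and cre_cmult [simp]: "cre m (\<lambda>S. c * f S) = (\<lambda>S. c * cre m f S)"
  and cre_zero [simp]: "cre m (\<lambda>S. 0) = (\<lambda>S. 0)"
  and cre_sum [simp]: "cre m (\<lambda>S. \<Sum>i\<in>I. h i S) = (\<lambda>S. \<Sum>i\<in>I. cre m (h i) S)"
  by (auto simp: cre_def fun_eq_iff algebra_simps sum_distrib_left)

lemma cre_ann_cre:
  assumes "fin_supp \<psi>"
  shows "cre a (ann b (cre c \<psi>)) S = (if b = c then cre a \<psi> S else 0) + cre c (cre a (ann b \<psi>)) S"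
proof -
  have "ann b (cre c \<psi>) = (\<lambda>S. (if b = c then \<psi> S else 0) - cre c (ann b \<psi>) S)"
    by (rule ext) (rule ann_cre_anticomm[OF assms])
  then have "cre a (ann b (cre c \<psi>)) S = (if b = c then cre a \<psi> S else 0) - cre a (cre c (ann b \<psi>)) S"
    by (cases "b = c") simp_all
  then show ?thesis using cre_anticomm[OF fin_supp_ann[OF assms], where a = a and b = c and S = S] by simp
qed

lemma cre_ann_ann:
  assumes "fin_supp \<psi>"
  shows "cre a (ann b (ann c \<psi>)) S = ann c (cre a (ann b \<psi>)) S - (if a = c then ann b \<psi> S else 0)"
proof -
  have "ann b (ann c \<psi>) = (\<lambda>S. - ann c (ann b \<psi>) S)"
    by (rule ext) (rule ann_anticomm[OF assms])
  then have "cre a (ann b (ann c \<psi>)) S = - cre a (ann c (ann b \<psi>)) S"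
    by simp
  then show ?thesis using ann_cre_anticomm[OF fin_supp_ann[OF assms], where a = c and b = a and S = S] by auto
qed

lemma cre_ann_cre_ann:
  assumes "fin_supp \<psi>"
  shows "cre a (ann b (cre c (ann d \<psi>))) S =
    (if b = c then cre a (ann d \<psi>) S else 0) - (if a = d then cre c (ann b \<psi>) S else 0)
    + cre c (ann d (cre a (ann b \<psi>))) S"
proof -
  have "cre a (ann b (ann d \<psi>)) = (\<lambda>S. ann d (cre a (ann b \<psi>)) S - (if a = d then ann b \<psi> S else 0))"
    by (rule ext) (rule cre_ann_ann[OF assms])
  then have "cre c (cre a (ann b (ann d \<psi>))) S
      = cre c (ann d (cre a (ann b \<psi>))) S - (if a = d then cre c (ann b \<psi>) S else 0)"
    by (cases "a = d") simp_all
  then show ?thesis using cre_ann_cre[OF fin_supp_ann[OF assms], where a = a and b = b and c = c and S = S] by simp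
qed

section \<open>Linear operators on the Fock space\<close>

definition linear_op :: "('a vec \<Rightarrow> 'a vec) \<Rightarrow> bool" where
  "linear_op F \<longleftrightarrow> (\<forall>f g. F (\<lambda>S. f S + g S) = (\<lambda>S. F f S + F g S))
                   \<and> (\<forall>c f. F (\<lambda>S. c * f S) = (\<lambda>S. c * F f S))"

lemma linear_op_add: "linear_op F \<Longrightarrow> F (\<lambda>S. f S + g S) = (\<lambda>S. F f S + F g S)"
  and linear_op_cmult: "linear_op F \<Longrightarrow> F (\<lambda>S. c * f S) = (\<lambda>S. c * F f S)"
  by (simp_all add: linear_op_def)

lemma linear_op_zero: "linear_op F \<Longrightarrow> F (\<lambda>S. 0) = (\<lambda>S. 0)"
  using linear_op_cmult[of F 0 "\<lambda>S. 0"] by simp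

lemma linear_op_uminus: "linear_op F \<Longrightarrow> F (\<lambda>S. - f S) = (\<lambda>S. - F f S)"
  using linear_op_cmult[of F "-1" f] by simp

lemma linear_op_diff: "linear_op F \<Longrightarrow> F (\<lambda>S. f S - g S) = (\<lambda>S. F f S - F g S)"
  using linear_op_add[of F f "\<lambda>S. - g S"] linear_op_uminus[of F g] by simp

lemma linear_op_divide: "linear_op F \<Longrightarrow> F (\<lambda>S. f S / c) = (\<lambda>S. F f S / c)"
  using linear_op_cmult[of F "1/c" f] by (simp add: divide_inverse mult.commute)

lemma linear_op_sum: "linear_op F \<Longrightarrow> F (\<lambda>S. \<Sum>i\<in>I. f i S) = (\<lambda>S. \<Sum>i\<in>I. F (f i) S)"
proof (induction I rule: infinite_finite_induct)
  case (insert x A)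
  then show ?case using linear_op_add[OF insert.prems, of "f x" "\<lambda>S. \<Sum>i\<in>A. f i S"] by simp
qed (simp_all add: linear_op_zero)

lemma linear_op_ann: "linear_op (ann m)"
  and linear_op_cre: "linear_op (cre m)"
  by (simp_all add: linear_op_def)

lemma linear_op_comp: "linear_op F \<Longrightarrow> linear_op G \<Longrightarrow> linear_op (\<lambda>\<psi>. F (G \<psi>))"
  by (simp add: linear_op_def)

lemma linear_op_lincomb_ops:
  assumes "\<And>i. i \<in> I \<Longrightarrow> linear_op (F i)"
  shows "linear_op (\<lambda>\<psi> S. \<Sum>i\<in>I. c i * F i \<psi> S)"
proof -
  have "F i (\<lambda>S. f S + g S) = (\<lambda>S. F i f S + F i g S)" "F i (\<lambda>S. c' * f S) = (\<lambda>S. c' * F i f S)"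
    if "i \<in> I" for i f g c'
    using assms[OF that] by (simp_all add: linear_op_add linear_op_cmult)
  then show ?thesis
    by (simp add: linear_op_def fun_eq_iff sum.distrib[symmetric] sum_distrib_left algebra_simps
        cong: sum.cong)
qed

lemma linear_op_sum_ops: "(\<And>i. i \<in> I \<Longrightarrow> linear_op (F i)) \<Longrightarrow> linear_op (\<lambda>\<psi> S. \<Sum>i\<in>I. F i \<psi> S)"
  using linear_op_lincomb_ops[of I F "\<lambda>_. 1"] by simp

lemma linear_op_annL: "linear_op (annL M B w \<sigma>)"
  unfolding annL_def[abs_def] by (rule linear_op_lincomb_ops) (rule linear_op_ann)

lemma linear_op_creL: "linear_op (creL M B w \<sigma>)"
  unfolding creL_def[abs_def] by (rule linear_op_lincomb_ops) (rule linear_op_cre)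

lemma linear_op_Sminus: "linear_op (Sminus z)"
  and linear_op_Splus: "linear_op (Splus z)"
  and linear_op_nop: "linear_op (nop m)"
  unfolding Sminus_def[abs_def] Splus_def[abs_def] nop_def[abs_def]
  by (rule linear_op_comp[OF linear_op_cre linear_op_ann])+

lemma linear_op_S3: "linear_op (S3 z)"
  unfolding S3_def[abs_def] linear_op_def
  by (auto simp: linear_op_add[OF linear_op_nop] linear_op_cmult[OF linear_op_nop] fun_eq_iff
      field_simps)

lemma linear_op_Stot: "(\<And>z. linear_op (Sop z)) \<Longrightarrow> linear_op (Stot M B Sop)"
  unfolding Stot_def[abs_def] by (rule linear_op_sum_ops)

lemma fin_supp_annL: "fin_supp \<psi> \<Longrightarrow> fin_supp (annL M B w \<sigma> \<psi>)"
  unfolding fin_supp_def annL_def ann_def by (auto intro!: sum.neutral)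

lemmas annL_linear = linear_op_diff[OF linear_op_annL] linear_op_sum[OF linear_op_annL]
  linear_op_cmult[OF linear_op_annL] linear_op_zero[OF linear_op_annL]
lemmas creL_linear = linear_op_add[OF linear_op_creL] linear_op_diff[OF linear_op_creL]
  linear_op_cmult[OF linear_op_creL] linear_op_zero[OF linear_op_creL] linear_op_uminus[OF linear_op_creL]
lemmas Sminus_tot_linear = linear_op_add[OF linear_op_Stot[OF linear_op_Sminus]]
  linear_op_diff[OF linear_op_Stot[OF linear_op_Sminus]] linear_op_divide[OF linear_op_Stot[OF linear_op_Sminus]]
  linear_op_cmult[OF linear_op_Stot[OF linear_op_Sminus]] linear_op_sum[OF linear_op_Stot[OF linear_op_Sminus]]
  linear_op_zero[OF linear_op_Stot[OF linear_op_Sminus]]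
lemmas Splus_tot_linear = linear_op_add[OF linear_op_Stot[OF linear_op_Splus]]
  linear_op_diff[OF linear_op_Stot[OF linear_op_Splus]] linear_op_divide[OF linear_op_Stot[OF linear_op_Splus]]
  linear_op_cmult[OF linear_op_Stot[OF linear_op_Splus]] linear_op_zero[OF linear_op_Stot[OF linear_op_Splus]]
lemmas S3_tot_linear = linear_op_add[OF linear_op_Stot[OF linear_op_S3]]
  linear_op_cmult[OF linear_op_Stot[OF linear_op_S3]]

section \<open>Smeared operators and total spin\<close>

lemma sum_sum_diagonal:
  "finite A \<Longrightarrow> (\<Sum>z\<in>A. \<Sum>z'\<in>A. if z = z' then f z z' else 0) = (\<Sum>z\<in>A. f z z)"
  by (simp add: sum.delta)

lemma annL_creL_anticomm:
  assumes "fin_supp \<psi>" and finite_Lam: "finite (Lam M B)"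
  shows "annL M B w \<sigma> (creL M B w' \<sigma>' \<psi>) S =
    (if \<sigma> = \<sigma>' then (\<Sum>z\<in>Lam M B. w z * cnj (w' z)) * \<psi> S else 0) - creL M B w' \<sigma>' (annL M B w \<sigma> \<psi>) S"
proof -
  have "annL M B w \<sigma> (creL M B w' \<sigma>' \<psi>) S =
     (\<Sum>z\<in>Lam M B. \<Sum>z'\<in>Lam M B. w z * cnj (w' z') * ann (z,\<sigma>) (cre (z',\<sigma>') \<psi>) S)"
    unfolding annL_def creL_def[abs_def] by (simp add: sum_distrib_left mult.assoc)
  also have "\<dots> = (\<Sum>z\<in>Lam M B. \<Sum>z'\<in>Lam M B. if z = z' then (if \<sigma> = \<sigma>' then w z * cnj (w' z') * \<psi> S else 0) else 0)
      - (\<Sum>z\<in>Lam M B. \<Sum>z'\<in>Lam M B. w z * cnj (w' z') * cre (z',\<sigma>') (ann (z,\<sigma>) \<psi>) S)"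
  proof -
    have "w z * cnj (w' z') * ann (z,\<sigma>) (cre (z',\<sigma>') \<psi>) S
      = (if z = z' then (if \<sigma> = \<sigma>' then w z * cnj (w' z') * \<psi> S else 0) else 0)
        - w z * cnj (w' z') * cre (z',\<sigma>') (ann (z,\<sigma>) \<psi>) S" for z z'
      by (simp add: ann_cre_anticomm[OF assms(1)] right_diff_distrib)
    then show ?thesis by (simp add: sum_subtractf)
  qed
  also have "(\<Sum>z\<in>Lam M B. \<Sum>z'\<in>Lam M B. w z * cnj (w' z') * cre (z',\<sigma>') (ann (z,\<sigma>) \<psi>) S)
      = creL M B w' \<sigma>' (annL M B w \<sigma> \<psi>) S"
    unfolding creL_def annL_def[abs_def]
    by (subst sum.swap) (simp add: sum_distrib_left mult.assoc mult.left_commute)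
  finally show ?thesis
    by (simp add: sum_sum_diagonal[OF finite_Lam] sum_distrib_right)
qed

lemma creL_anticomm:
  assumes "fin_supp \<psi>"
  shows "creL M B w \<sigma> (creL M B w' \<sigma>' \<psi>) S = - creL M B w' \<sigma>' (creL M B w \<sigma> \<psi>) S"
proof -
  have "creL M B w \<sigma> (creL M B w' \<sigma>' \<psi>) S =
     (\<Sum>z\<in>Lam M B. \<Sum>z'\<in>Lam M B. cnj (w z) * cnj (w' z') * cre (z,\<sigma>) (cre (z',\<sigma>') \<psi>) S)"
    unfolding creL_def[abs_def] by (simp add: sum_distrib_left mult.assoc)
  also have "\<dots> = - (\<Sum>z\<in>Lam M B. \<Sum>z'\<in>Lam M B. cnj (w z) * cnj (w' z') * cre (z',\<sigma>') (cre (z,\<sigma>) \<psi>) S)"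
    unfolding sum_negf[symmetric] by (intro sum.cong refl) (subst cre_anticomm[OF assms], simp)
  also have "(\<Sum>z\<in>Lam M B. \<Sum>z'\<in>Lam M B. cnj (w z) * cnj (w' z') * cre (z',\<sigma>') (cre (z,\<sigma>) \<psi>) S)
      = creL M B w' \<sigma>' (creL M B w \<sigma> \<psi>) S"
    unfolding creL_def[abs_def]
    by (subst sum.swap) (simp add: sum_distrib_left mult.assoc mult.left_commute)
  finally show ?thesis .
qed

lemma creL_square: "fin_supp \<psi> \<Longrightarrow> creL M B w \<sigma> (creL M B w \<sigma> \<psi>) S = 0"
  using creL_anticomm[where w = w and w' = w and \<sigma> = \<sigma> and \<sigma>' = \<sigma>] by simp

lemma Sminus_creL_comm:
  assumes "fin_supp \<psi>" and "finite (Lam M B)"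
  shows "Stot M B Sminus (creL M B w \<sigma> \<psi>) S
    = (if \<sigma> then creL M B w False \<psi> S else 0) + creL M B w \<sigma> (Stot M B Sminus \<psi>) S"
proof -
  have "Stot M B Sminus (creL M B w \<sigma> \<psi>) S
      = (\<Sum>z\<in>Lam M B. \<Sum>z'\<in>Lam M B. cnj (w z') * cre (z,False) (ann (z,True) (cre (z',\<sigma>) \<psi>)) S)"
    unfolding Stot_def Sminus_def creL_def[abs_def] by simp
  also have "\<dots> = (\<Sum>z\<in>Lam M B. \<Sum>z'\<in>Lam M B. if z = z' then (if \<sigma> then cnj (w z') * cre (z,False) \<psi> S else 0) else 0)
     + (\<Sum>z\<in>Lam M B. \<Sum>z'\<in>Lam M B. cnj (w z') * cre (z',\<sigma>) (cre (z,False) (ann (z,True) \<psi>)) S)"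
  proof -
    have "cnj (w z') * cre (z,False) (ann (z,True) (cre (z',\<sigma>) \<psi>)) S
      = (if z = z' then (if \<sigma> then cnj (w z') * cre (z,False) \<psi> S else 0) else 0)
        + cnj (w z') * cre (z',\<sigma>) (cre (z,False) (ann (z,True) \<psi>)) S" for z z'
      by (subst cre_ann_cre[OF assms(1)]) (auto simp: distrib_left)
    then show ?thesis by (simp add: sum.distrib)
  qed
  also have "(\<Sum>z\<in>Lam M B. \<Sum>z'\<in>Lam M B. cnj (w z') * cre (z',\<sigma>) (cre (z,False) (ann (z,True) \<psi>)) S)
      = creL M B w \<sigma> (Stot M B Sminus \<psi>) S"
    unfolding creL_def Stot_def Sminus_def by (subst sum.swap) (simp add: sum_distrib_left)
  finally show ?thesis by (simp add: sum_sum_diagonal[OF assms(2)] creL_def)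
qed

lemma Sminus_annL_comm:
  assumes "fin_supp \<psi>" and "finite (Lam M B)"
  shows "Stot M B Sminus (annL M B w \<sigma> \<psi>) S
    = annL M B w \<sigma> (Stot M B Sminus \<psi>) S - (if \<sigma> then 0 else annL M B w True \<psi> S)"
proof -
  have "Stot M B Sminus (annL M B w \<sigma> \<psi>) S
      = (\<Sum>z\<in>Lam M B. \<Sum>z'\<in>Lam M B. w z' * cre (z,False) (ann (z,True) (ann (z',\<sigma>) \<psi>)) S)"
    unfolding Stot_def Sminus_def annL_def[abs_def] by simp
  also have "\<dots> = (\<Sum>z\<in>Lam M B. \<Sum>z'\<in>Lam M B. w z' * ann (z',\<sigma>) (cre (z,False) (ann (z,True) \<psi>)) S)
     - (\<Sum>z\<in>Lam M B. \<Sum>z'\<in>Lam M B. if z = z' then (if \<sigma> then 0 else w z' * ann (z,True) \<psi> S) else 0)"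
  proof -
    have "w z' * cre (z,False) (ann (z,True) (ann (z',\<sigma>) \<psi>)) S
      = w z' * ann (z',\<sigma>) (cre (z,False) (ann (z,True) \<psi>)) S
        - (if z = z' then (if \<sigma> then 0 else w z' * ann (z,True) \<psi> S) else 0)" for z z'
      by (subst cre_ann_ann[OF assms(1)]) (auto simp: right_diff_distrib)
    then show ?thesis by (simp add: sum_subtractf)
  qed
  also have "(\<Sum>z\<in>Lam M B. \<Sum>z'\<in>Lam M B. w z' * ann (z',\<sigma>) (cre (z,False) (ann (z,True) \<psi>)) S)
      = annL M B w \<sigma> (Stot M B Sminus \<psi>) S"
    unfolding annL_def Stot_def Sminus_def by (subst sum.swap) (simp add: sum_distrib_left)
  finally show ?thesis by (simp add: sum_sum_diagonal[OF assms(2)] annL_def)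
qed

lemma Splus_Sminus_comm:
  assumes "fin_supp \<psi>" and "finite (Lam M B)"
  shows "Stot M B Splus (Stot M B Sminus \<psi>) S
    = Stot M B Sminus (Stot M B Splus \<psi>) S + 2 * Stot M B S3 \<psi> S"
proof -
  have "Stot M B Splus (Stot M B Sminus \<psi>) S
      = (\<Sum>z\<in>Lam M B. \<Sum>z'\<in>Lam M B. cre (z,True) (ann (z,False) (cre (z',False) (ann (z',True) \<psi>))) S)"
    unfolding Stot_def Sminus_def Splus_def by simp
  also have "\<dots> = (\<Sum>z\<in>Lam M B. \<Sum>z'\<in>Lam M B. if z = z' then cre (z,True) (ann (z',True) \<psi>) S - cre (z',False) (ann (z,False) \<psi>) S else 0)
     + (\<Sum>z\<in>Lam M B. \<Sum>z'\<in>Lam M B. cre (z',False) (ann (z',True) (cre (z,True) (ann (z,False) \<psi>))) S)"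
  proof -
    have "cre (z,True) (ann (z,False) (cre (z',False) (ann (z',True) \<psi>))) S
      = (if z = z' then cre (z,True) (ann (z',True) \<psi>) S - cre (z',False) (ann (z,False) \<psi>) S else 0)
        + cre (z',False) (ann (z',True) (cre (z,True) (ann (z,False) \<psi>))) S" for z z'
      by (subst cre_ann_cre_ann[OF assms(1)]) auto
    then show ?thesis by (simp add: sum.distrib)
  qed
  also have "(\<Sum>z\<in>Lam M B. \<Sum>z'\<in>Lam M B. cre (z',False) (ann (z',True) (cre (z,True) (ann (z,False) \<psi>))) S)
      = Stot M B Sminus (Stot M B Splus \<psi>) S"
    unfolding Stot_def Sminus_def Splus_def by (subst sum.swap) simp
  finally show ?thesis
    by (simp add: sum_sum_diagonal[OF assms(2)] Stot_def S3_def nop_def sum_divide_distrib[symmetric])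
qed

lemma Stot_sq_ladder:
  "Stot_sq M B \<psi> S = (Stot M B Splus (Stot M B Sminus \<psi>) S + Stot M B Sminus (Stot M B Splus \<psi>) S) / 2
    + Stot M B S3 (Stot M B S3 \<psi>) S"
proof -
  have "Stot M B S1 \<psi> = (\<lambda>S. (Stot M B Splus \<psi> S + Stot M B Sminus \<psi> S) / 2)"
    "Stot M B S2 \<psi> = (\<lambda>S. (Stot M B Splus \<psi> S - Stot M B Sminus \<psi> S) / (2 * \<i>))"
    for \<psi> by (simp_all only: Stot_def S1_def S2_def sum_divide_distrib[symmetric] sum.distrib sum_subtractf)
  then show ?thesis
    unfolding Stot_sq_def by (simp add: Splus_tot_linear Sminus_tot_linear field_simps)
qed

lemma linear_op_Stot_sq: "linear_op (Stot_sq M B)"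
  unfolding linear_op_def fun_eq_iff Stot_sq_ladder
  by (simp add: Sminus_tot_linear Splus_tot_linear S3_tot_linear field_simps)

section \<open>The Fock-space inner product\<close>

lemma inner_F_cre_adjoint:
  assumes m: "m \<in> modes M B" and fm: "finite (modes M B)"
  shows "inner_F M B \<phi> (cre m \<chi>) = inner_F M B (ann m \<phi>) \<chi>"
proof -
  let ?P = "Pow (modes M B)"
  have fP: "finite ?P" using fm by simp
  have "inner_F M B \<phi> (cre m \<chi>)
      = (\<Sum>S\<in>?P. if m \<in> S then cnj (\<phi> S) * (fsign (S - {m}) m * \<chi> (S - {m})) else 0)"
    unfolding inner_F_def cre_def by (intro sum.cong refl) auto
  also have "\<dots> = (\<Sum>S\<in>{S\<in>?P. m \<in> S}. cnj (\<phi> S) * (fsign (S - {m}) m * \<chi> (S - {m})))"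
    by (rule sum.inter_filter[OF fP, symmetric])
  also have "\<dots> = (\<Sum>T\<in>{T\<in>?P. m \<notin> T}. cnj (\<phi> (insert m T)) * (fsign T m * \<chi> T))"
    by (rule sum.reindex_bij_witness[where j = "insert m" and i = "\<lambda>S. S - {m}", symmetric])
      (use m in auto)
  also have "\<dots> = (\<Sum>T\<in>?P. if m \<notin> T then cnj (\<phi> (insert m T)) * (fsign T m * \<chi> T) else 0)"
    by (rule sum.inter_filter[OF fP])
  also have "\<dots> = inner_F M B (ann m \<phi>) \<chi>"
    unfolding inner_F_def ann_def by (intro sum.cong refl) auto
  finally show ?thesis .
qed

lemma inner_F_sum: "inner_F M B \<phi> (\<lambda>S. \<Sum>i\<in>I. f i S) = (\<Sum>i\<in>I. inner_F M B \<phi> (f i))"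
  unfolding inner_F_def by (simp add: sum_distrib_left) (rule sum.swap)

lemma inner_F_cmult: "inner_F M B \<phi> (\<lambda>S. c * f S) = c * inner_F M B \<phi> f"
  unfolding inner_F_def by (simp add: sum_distrib_left mult.left_commute)

lemma inner_F_add: "inner_F M B \<phi> (\<lambda>S. f S + g S) = inner_F M B \<phi> f + inner_F M B \<phi> g"
  unfolding inner_F_def by (simp add: distrib_left sum.distrib)

lemma inner_F_sum_left:
  "inner_F M B (\<lambda>S. \<Sum>i\<in>I. c i * f i S) \<chi> = (\<Sum>i\<in>I. cnj (c i) * inner_F M B (f i) \<chi>)"
  unfolding inner_F_def by (simp add: sum_distrib_left sum_distrib_right mult.assoc) (rule sum.swap)

lemma inner_F_creL_adjoint:
  assumes "finite (modes M B)"
  shows "inner_F M B \<phi> (creL M B w \<sigma> \<chi>) = inner_F M B (annL M B w \<sigma> \<phi>) \<chi>"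
proof -
  have "inner_F M B \<phi> (creL M B w \<sigma> \<chi>) = (\<Sum>z\<in>Lam M B. cnj (w z) * inner_F M B \<phi> (cre (z,\<sigma>) \<chi>))"
    unfolding creL_def by (simp add: inner_F_sum inner_F_cmult)
  also have "\<dots> = (\<Sum>z\<in>Lam M B. cnj (w z) * inner_F M B (ann (z,\<sigma>) \<phi>) \<chi>)"
    using inner_F_cre_adjoint[OF _ assms] by (simp add: modes_def)
  also have "\<dots> = inner_F M B (annL M B w \<sigma> \<phi>) \<chi>"
    unfolding annL_def by (simp add: inner_F_sum_left)
  finally show ?thesis .
qed

definition norm_sq :: "'a set \<Rightarrow> ('a \<times> 'a) set \<Rightarrow> 'a vec \<Rightarrow> real" where
  "norm_sq M B \<phi> = (\<Sum>S\<in>Pow (modes M B). (cmod (\<phi> S))\<^sup>2)"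

lemma inner_F_self: "inner_F M B \<phi> \<phi> = complex_of_real (norm_sq M B \<phi>)"
  unfolding inner_F_def norm_sq_def
  by (simp add: complex_norm_square mult.commute del: of_real_power)

lemma norm_sq_nonneg: "norm_sq M B \<phi> \<ge> 0"
  unfolding norm_sq_def by (simp add: sum_nonneg)

lemma norm_sq_eq_0_iff:
  "finite (modes M B) \<Longrightarrow> norm_sq M B \<phi> = 0 \<longleftrightarrow> (\<forall>S. S \<subseteq> modes M B \<longrightarrow> \<phi> S = 0)"
  unfolding norm_sq_def by (simp add: sum_nonneg_eq_0_iff) blast

lemma tendsto_affine_at_top:
  assumes "((\<lambda>x::real. a + x * b) \<longlongrightarrow> L) at_top"
  shows "b = 0 \<and> L = a"
proof -
  have "b = 0"
  proof (rule ccontr)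
    assume "b \<noteq> 0"
    then have "((\<lambda>x::real. x) \<longlongrightarrow> (L - a) / b) at_top"
      using tendsto_divide[OF tendsto_diff[OF assms tendsto_const[of a]] tendsto_const[of b]] by simp
    moreover have "filterlim (\<lambda>x::real. x) at_infinity at_top"
      by (rule filterlim_at_top_imp_at_infinity) (rule filterlim_ident)
    ultimately show False using not_tendsto_and_filterlim_at_infinity[of "at_top::real filter"] by auto
  qed
  moreover from this have "L = a"
    using assms by (simp add: tendsto_const_iff)
  ultimately show ?thesis by simp
qed

section \<open>The lattice\<close>

definition vacuum :: "'a vec" where
  "vacuum = (\<lambda>S. if S = {} then 1 else 0)"

definition down_count :: "'a mode set \<Rightarrow> nat" where
  "down_count S = card {m\<in>S. \<not> snd m}"

definition no_double_occ :: "'a vec \<Rightarrow> bool" where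
  "no_double_occ \<psi> \<longleftrightarrow> (\<forall>S z. (z,True) \<in> S \<and> (z,False) \<in> S \<longrightarrow> \<psi> S = 0)"

lemma no_double_occ_vanishes:
  "no_double_occ \<Phi> \<Longrightarrow> (z,a) \<in> S \<Longrightarrow> (z,b) \<in> S \<Longrightarrow> a \<noteq> b \<Longrightarrow> \<Phi> S = 0"
  unfolding no_double_occ_def by (cases a) auto

lemma ann_vacuum: "ann m vacuum = (\<lambda>S. 0)"
  by (auto simp: ann_def vacuum_def fun_eq_iff)

lemma annL_vacuum: "annL M B w \<sigma> vacuum = (\<lambda>S. 0)"
  by (simp add: annL_def ann_vacuum)

lemma modes_iff [simp]: "(z,b) \<in> modes M B \<longleftrightarrow> z \<in> Lam M B"
  by (simp add: modes_def)

lemma MS_in_Lam_iff: "MS x \<in> Lam M B \<longleftrightarrow> x \<in> M"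
  by (auto simp: Lam_def Osites_def OBsites_def)

lemma OS_in_Lam: "(x,y) \<in> B \<Longrightarrow> OS x y \<in> Lam M B"
  and OB_in_Lam: "(x,y) \<in> B \<Longrightarrow> OB x y \<in> Lam M B"
  by (force simp: Lam_def Osites_def OBsites_def)+

locale flat_band_hubbard =
  fixes M :: "'a::linorder set" and B :: "('a \<times> 'a) set" and zeta :: nat and mu t :: real
  assumes finite_M: "finite M" and B_subset: "B \<subseteq> M \<times> M"
    and B_irrefl: "\<forall>(x,y)\<in>B. x \<noteq> y" and B_asym: "\<forall>x y. (x,y) \<in> B \<longrightarrow> (y,x) \<notin> B"
    and connected: "\<forall>x\<in>M. \<forall>y\<in>M. (x,y) \<in> (Edg B)\<^sup>*"
    and mu_pos: "mu > 0"
begin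

lemma finite_B: "finite B"
  using finite_subset[OF B_subset] finite_M by auto

lemma finite_Lam: "finite (Lam M B)"
  unfolding Lam_def Osites_def OBsites_def using finite_M finite_B by auto

lemma finite_modes: "finite (modes M B)"
  unfolding modes_def using finite_Lam by simp

lemma bond_sites: "(x,y) \<in> B \<Longrightarrow> x \<in> M \<and> y \<in> M \<and> x \<noteq> y"
  using B_subset B_irrefl by auto

lemma sum_Lam_restrict:
  "K \<subseteq> Lam M B \<Longrightarrow> (\<And>z. z \<in> Lam M B \<Longrightarrow> z \<notin> K \<Longrightarrow> f z = 0) \<Longrightarrow> (\<Sum>z\<in>Lam M B. f z) = (\<Sum>z\<in>K. f z)"
  by (rule sum.mono_neutral_right[OF finite_Lam]) auto

definition in_sector :: "nat \<Rightarrow> nat \<Rightarrow> 'a vec \<Rightarrow> bool" where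
  "in_sector n k \<psi> \<longleftrightarrow> (\<forall>S. \<psi> S \<noteq> 0 \<longrightarrow> S \<subseteq> modes M B \<and> card S = n \<and> down_count S = k)"

lemma in_sector_fin_supp: "in_sector n k \<psi> \<Longrightarrow> fin_supp \<psi>"
  unfolding in_sector_def fin_supp_def using finite_modes finite_subset by blast

lemma in_sector_vacuum: "in_sector 0 0 vacuum"
  by (simp add: in_sector_def vacuum_def down_count_def)

lemma in_sector_creL_up:
  assumes "in_sector n 0 \<psi>"
  shows "in_sector (Suc n) 0 (creL M B w True \<psi>)"
  unfolding in_sector_def
proof (intro allI impI)
  fix S assume "creL M B w True \<psi> S \<noteq> 0"
  then obtain z where z: "z \<in> Lam M B" "cre (z,True) \<psi> S \<noteq> 0"
    unfolding creL_def by (auto elim: sum.not_neutral_contains_not_neutral)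
  define S' where "S' = S - {(z,True)}"
  have "\<psi> S' \<noteq> 0" and S: "S = insert (z,True) S'" "(z,True) \<notin> S'"
    using z(2) by (auto simp: cre_def S'_def split: if_splits)
  then have S': "S' \<subseteq> modes M B" "card S' = n" "down_count S' = 0"
    using assms unfolding in_sector_def by auto
  have "finite S'" using S'(1) finite_modes finite_subset by blast
  moreover have "{m\<in>S. \<not> snd m} = {m\<in>S'. \<not> snd m}" using S by auto
  ultimately show "S \<subseteq> modes M B \<and> card S = Suc n \<and> down_count S = 0"
    using S S' z(1) by (auto simp: down_count_def)
qed

lemma in_sector_Sminus:
  assumes "in_sector n k \<psi>"
  shows "in_sector n (Suc k) (Stot M B Sminus \<psi>)"
  unfolding in_sector_def
proof (intro allI impI)
  fix S assume "Stot M B Sminus \<psi> S \<noteq> 0"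
  then obtain z where z: "z \<in> Lam M B" "cre (z,False) (ann (z,True) \<psi>) S \<noteq> 0"
    unfolding Stot_def Sminus_def by (auto elim: sum.not_neutral_contains_not_neutral)
  define S' where "S' = insert (z,True) (S - {(z,False)})"
  have "\<psi> S' \<noteq> 0" and S: "S = insert (z,False) (S' - {(z,True)})" "(z,True) \<in> S'" "(z, False) \<notin> S'"
    using z(2) by (auto simp: cre_def ann_def S'_def split: if_splits)
  then have S': "S' \<subseteq> modes M B" "card S' = n" "down_count S' = k"
    using assms unfolding in_sector_def by auto
  have fin: "finite S'" using S'(1) finite_modes finite_subset by blast
  have "card S = Suc (card (S' - {(z,True)}))" using S(1,3) fin by simp
  also have "\<dots> = n" using card_Suc_Diff1[OF fin S(2)] S'(2) by simp
  finally have "card S = n" .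
  moreover have "{m\<in>S. \<not> snd m} = insert (z,False) {m\<in>S'. \<not> snd m}" using S by auto
  then have "down_count S = Suc k" using S(3) S'(3) fin by (simp add: down_count_def)
  moreover have "S \<subseteq> modes M B" using S S'(1) z(1) by auto
  ultimately show "S \<subseteq> modes M B \<and> card S = n \<and> down_count S = Suc k" by simp
qed

lemma no_double_occ_Sminus:
  assumes "no_double_occ \<psi>"
  shows "no_double_occ (Stot M B Sminus \<psi>)"
  unfolding no_double_occ_def
proof (intro allI impI)
  fix S :: "'a mode set" and z :: "'a site" assume zS: "(z,True) \<in> S \<and> (z,False) \<in> S"
  have "cre (z',False) (ann (z',True) \<psi>) S = 0" for z'
  proof (cases "z' = z")
    case True
    then have "(z',True) \<in> S - {(z',False)}" using zS by simp
    then show ?thesis by (simp add: cre_def ann_def)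
  next
    case False
    let ?S' = "insert (z',True) (S - {(z',False)})"
    have "(z,True) \<in> ?S' \<and> (z,False) \<in> ?S'" using zS False by auto
    then have "\<psi> ?S' = 0" using assms no_double_occ_def by metis
    then show ?thesis by (simp add: cre_def ann_def)
  qed
  then show "Stot M B Sminus \<psi> S = 0" by (simp add: Stot_def Sminus_def)
qed

lemma S3_tot_in_sector:
  assumes "in_sector n k \<psi>"
  shows "Stot M B S3 \<psi> S = (of_nat n / 2 - of_nat k) * \<psi> S"
proof (cases "\<psi> S = 0")
  case False
  then have S: "S \<subseteq> modes M B" "card S = n" "down_count S = k"
    using assms unfolding in_sector_def by auto
  have fin: "finite S" using S(1) finite_modes finite_subset by blast
  have count: "(\<Sum>z\<in>Lam M B. if (z,b) \<in> S then 1 else 0) = (of_nat (card {m\<in>S. snd m = b}) :: complex)" for b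
  proof -
    have "{m\<in>S. snd m = b} = (\<lambda>z. (z,b)) ` {z\<in>Lam M B. (z,b) \<in> S}"
      using S(1) by (auto simp: modes_def image_iff)
    then have "card {m\<in>S. snd m = b} = card {z\<in>Lam M B. (z,b) \<in> S}"
      by (simp add: card_image inj_on_def)
    then show ?thesis using finite_Lam by (simp add: sum.inter_filter[symmetric])
  qed
  have "card S = card {m\<in>S. snd m = True} + card {m\<in>S. snd m = False}"
    using fin by (subst card_Un_disjoint[symmetric]) (auto intro: arg_cong[where f = card])
  then have "card {m\<in>S. snd m = True} = n - k" "card {m\<in>S. snd m = False} = k" "k \<le> n"
    using S(2,3) by (simp_all add: down_count_def)
  then have "(\<Sum>z\<in>Lam M B. ((if (z,True) \<in> S then 1 else 0) - (if (z,False) \<in> S then 1 else 0)) / 2)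
      = ((of_nat n - of_nat k) - of_nat k) / (2 :: complex)"
    by (simp add: count sum_subtractf sum_divide_distrib[symmetric] of_nat_diff)
  moreover have "Stot M B S3 \<psi> S
      = (\<Sum>z\<in>Lam M B. ((if (z,True) \<in> S then 1 else 0) - (if (z,False) \<in> S then 1 else 0)) / 2) * \<psi> S"
    unfolding Stot_def S3_def nop_apply sum_distrib_right by (intro sum.cong) auto
  ultimately have "Stot M B S3 \<psi> S = ((of_nat n - of_nat k) - of_nat k) / 2 * \<psi> S"
    by simp
  then show ?thesis by (simp add: field_simps)
qed (simp add: Stot_def S3_def nop_apply cong: if_cong)

lemma bcoef_acoef_orthogonal:
  assumes v: "v \<in> Osites B \<union> OBsites B"
  shows "(\<Sum>z\<in>Lam M B. bcoef mu v z * cnj (acoef B zeta mu x z)) = 0"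
proof -
  from v obtain p q where pq: "(p,q) \<in> B" and "v = OS p q \<or> v = OB p q"
    by (auto simp: Osites_def OBsites_def)
  moreover have "{v, MS p, MS q} \<subseteq> Lam M B" if "v = OS p q \<or> v = OB p q"
    using that pq bond_sites[OF pq] by (auto simp: OS_in_Lam OB_in_Lam MS_in_Lam_iff)
  ultimately have "(\<Sum>z\<in>Lam M B. bcoef mu v z * cnj (acoef B zeta mu x z))
      = (\<Sum>z\<in>{v, MS p, MS q}. bcoef mu v z * cnj (acoef B zeta mu x z))"
    by (intro sum_Lam_restrict) (auto simp: bcoef_def split: site.splits)
  also have "\<dots> = 0"
    using \<open>v = OS p q \<or> v = OB p q\<close> pq bond_sites[OF pq] by (auto simp: bcoef_def acoef_def)
  finally show ?thesis .
qed

lemma acoef_orthogonal: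
  assumes "x \<noteq> y"
  shows "(\<Sum>z\<in>Lam M B. acoef B zeta mu y z * cnj (acoef B zeta mu x z)) = 0"
proof -
  let ?f = "\<lambda>z. acoef B zeta mu y z * cnj (acoef B zeta mu x z)"
  define K where "K = (if (x,y) \<in> B then {OS x y, OB x y} else if (y,x) \<in> B then {OS y x, OB y x} else {})"
  have "K \<subseteq> Lam M B" by (auto simp: K_def OS_in_Lam OB_in_Lam)
  moreover have "?f z = 0" if "z \<notin> K" for z
    using that assms B_asym by (cases z) (auto simp: acoef_def K_def)
  ultimately have "(\<Sum>z\<in>Lam M B. ?f z) = (\<Sum>z\<in>K. ?f z)" by (intro sum_Lam_restrict) auto
  also have "\<dots> = 0" using assms B_asym by (auto simp: K_def acoef_def)
  finally show ?thesis .
qed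

lemma acoef_norm_nonzero:
  assumes x: "x \<in> M"
  shows "(\<Sum>z\<in>Lam M B. acoef B zeta mu x z * cnj (acoef B zeta mu x z)) \<noteq> 0"
proof -
  have "(cmod (acoef B zeta mu x (MS x)))\<^sup>2 \<le> (\<Sum>z\<in>Lam M B. (cmod (acoef B zeta mu x z))\<^sup>2)"
    by (rule member_le_sum) (auto simp: MS_in_Lam_iff x finite_Lam)
  moreover have "1 + 2 * real zeta * mu\<^sup>2 > 0" by (simp add: add_pos_nonneg)
  then have "(cmod (acoef B zeta mu x (MS x)))\<^sup>2 > 0" by (simp add: acoef_def)
  ultimately have "(\<Sum>z\<in>Lam M B. (cmod (acoef B zeta mu x z))\<^sup>2) \<noteq> 0" by linarith
  moreover have "acoef B zeta mu x z * cnj (acoef B zeta mu x z) = of_real ((cmod (acoef B zeta mu x z))\<^sup>2)" for z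
    by (simp add: complex_norm_square del: of_real_power)
  ultimately show ?thesis by (simp only: of_real_sum[symmetric] of_real_eq_0_iff) simp
qed

definition up_product :: "'a list \<Rightarrow> 'a vec" where
  "up_product xs = foldr (\<lambda>x \<psi>. creL M B (acoef B zeta mu x) True \<psi>) xs vacuum"

lemma up_product_simps [simp]:
  "up_product [] = vacuum"
  "up_product (x # xs) = creL M B (acoef B zeta mu x) True (up_product xs)"
  by (simp_all add: up_product_def)

lemma up_product_in_sector: "in_sector (length xs) 0 (up_product xs)"
  by (induction xs) (simp_all add: in_sector_vacuum in_sector_creL_up)

lemma fin_supp_up_product: "fin_supp (up_product xs)"
  using in_sector_fin_supp[OF up_product_in_sector] .

lemma annL_creL_up_product:
  "annL M B w True (creL M B (acoef B zeta mu x) True (up_product xs))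
    = (\<lambda>S. (\<Sum>z\<in>Lam M B. w z * cnj (acoef B zeta mu x z)) * up_product xs S
      - creL M B (acoef B zeta mu x) True (annL M B w True (up_product xs)) S)"
  by (simp add: annL_creL_anticomm[OF fin_supp_up_product finite_Lam] fun_eq_iff)

lemma annL_b_up_product:
  assumes "v \<in> Osites B \<union> OBsites B"
  shows "annL M B (bcoef mu v) True (up_product xs) = (\<lambda>S. 0)"
  by (induction xs)
    (simp_all add: annL_vacuum annL_creL_up_product bcoef_acoef_orthogonal[OF assms] creL_linear)

lemma annL_a_up_product_notin:
  "y \<notin> set xs \<Longrightarrow> annL M B (acoef B zeta mu y) True (up_product xs) = (\<lambda>S. 0)"
  by (induction xs)
    (simp_all add: annL_vacuum annL_creL_up_product acoef_orthogonal[OF not_sym] creL_linear)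

lemma annL_a_up_product_Cons:
  "x \<notin> set xs \<Longrightarrow> annL M B (acoef B zeta mu x) True (creL M B (acoef B zeta mu x) True (up_product xs))
    = (\<lambda>S. (\<Sum>z\<in>Lam M B. acoef B zeta mu x z * cnj (acoef B zeta mu x z)) * up_product xs S)"
  by (simp add: annL_creL_up_product annL_a_up_product_notin creL_linear)

lemma up_product_nonzero: "distinct xs \<Longrightarrow> set xs \<subseteq> M \<Longrightarrow> up_product xs \<noteq> (\<lambda>S. 0)"
proof (induction xs)
  case (Cons x xs)
  show ?case
  proof
    assume "up_product (x # xs) = (\<lambda>S. 0)"
    then have "annL M B (acoef B zeta mu x) True (up_product (x # xs)) = (\<lambda>S. 0)"
      by (simp add: annL_linear)
    then have "\<forall>S. (\<Sum>z\<in>Lam M B. acoef B zeta mu x z * cnj (acoef B zeta mu x z)) * up_product xs S = 0"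
      using Cons.prems by (simp add: annL_a_up_product_Cons fun_eq_iff)
    then have "up_product xs = (\<lambda>S. 0)"
      using Cons.prems acoef_norm_nonzero[of x] by (simp add: fun_eq_iff)
    then show False using Cons by simp
  qed
qed (simp add: vacuum_def fun_eq_iff)

lemma creL_a_up_product_mem:
  "x \<in> set xs \<Longrightarrow> creL M B (acoef B zeta mu x) True (up_product xs) = (\<lambda>S. 0)"
proof (induction xs)
  case (Cons x' xs)
  show ?case
  proof (cases "x = x'")
    case True
    then show ?thesis by (simp add: creL_square[OF fin_supp_up_product] fun_eq_iff)
  next
    case False
    then have "creL M B (acoef B zeta mu x) True (up_product xs) = (\<lambda>S. 0)" using Cons by simp
    then show ?thesis
      by (intro ext) (simp add: creL_anticomm[OF fin_supp_up_product, where w' = "acoef B zeta mu x'"]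
          creL_linear)
  qed
qed simp

text \<open>Pauli exclusion: an up electron cannot hop onto a site already carrying one.\<close>

lemma creL_annL_up_product:
  "distinct xs \<Longrightarrow> x \<in> set xs \<Longrightarrow> x \<noteq> y \<Longrightarrow>
   creL M B (acoef B zeta mu x) True (annL M B (acoef B zeta mu y) True (up_product xs)) = (\<lambda>S. 0)"
proof (induction xs)
  case (Cons x1 xs)
  show ?case
  proof (cases "y = x1")
    case True
    then have "x \<in> set xs" "y \<notin> set xs" using Cons.prems by auto
    then show ?thesis using True
      by (simp add: annL_a_up_product_Cons creL_linear creL_a_up_product_mem)
  next
    case False
    have e: "annL M B (acoef B zeta mu y) True (up_product (x1 # xs))
      = (\<lambda>S. - creL M B (acoef B zeta mu x1) True (annL M B (acoef B zeta mu y) True (up_product xs)) S)"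
      using False by (intro ext) (simp add: annL_creL_up_product acoef_orthogonal)
    show ?thesis
    proof (cases "x = x1")
      case True
      then show ?thesis unfolding e
        by (simp add: creL_linear creL_square[OF fin_supp_annL[OF fin_supp_up_product]])
    next
      case False
      then have "creL M B (acoef B zeta mu x) True (annL M B (acoef B zeta mu y) True (up_product xs))
          = (\<lambda>S. 0)"
        using Cons by simp
      then show ?thesis unfolding e
        by (intro ext) (simp add: creL_linear
            creL_anticomm[OF fin_supp_annL[OF fin_supp_up_product], where w' = "acoef B zeta mu x1"])
    qed
  qed
qed simp

lemma ann_down_sector_0:
  assumes "in_sector n 0 \<psi>"
  shows "ann (z,False) \<psi> = (\<lambda>S. 0)"
proof
  fix S
  show "ann (z,False) \<psi> S = 0"
  proof (cases "\<psi> (insert (z,False) S) = 0")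
    case False
    then have S: "insert (z,False) S \<subseteq> modes M B" "down_count (insert (z,False) S) = 0"
      using assms unfolding in_sector_def by blast+
    have "finite {m \<in> insert (z,False) S. \<not> snd m}"
      by (rule finite_subset[OF _ finite_modes]) (use S(1) in auto)
    then have "down_count (insert (z,False) S) > 0"
      unfolding down_count_def by (auto simp: card_gt_0_iff)
    then show ?thesis using S(2) by simp
  qed (simp add: ann_def)
qed

lemma Splus_tot_sector_0: "in_sector n 0 \<psi> \<Longrightarrow> Stot M B Splus \<psi> = (\<lambda>S. 0)"
  by (simp add: Stot_def Splus_def ann_down_sector_0)

lemma no_double_occ_sector_0:
  assumes "in_sector n 0 \<psi>"
  shows "no_double_occ \<psi>"
  unfolding no_double_occ_def
proof (intro allI impI)
  fix S :: "'a mode set" and z assume "(z,True) \<in> S \<and> (z,False) \<in> S"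
  then have "insert (z,False) (S - {(z,False)}) = S" by auto
  then show "\<psi> S = 0"
    using fun_cong[OF ann_down_sector_0[OF assms, of z], of "S - {(z,False)}"] by (simp add: ann_def)
qed

definition flat_state :: "nat \<Rightarrow> 'a vec" where
  "flat_state k = (Stot M B Sminus ^^ k) (up_product (sorted_list_of_set M))"

lemma flat_state_0: "flat_state 0 = up_product (sorted_list_of_set M)"
  and flat_state_Suc: "flat_state (Suc k) = Stot M B Sminus (flat_state k)"
  by (simp_all add: flat_state_def)

lemma flat_state_in_sector: "in_sector (card M) k (flat_state k)"
  using finite_M
  by (induction k) (simp_all add: flat_state_0 flat_state_Suc in_sector_Sminus
      up_product_in_sector[of "sorted_list_of_set M", simplified])

lemma fin_supp_flat_state: "fin_supp (flat_state k)"
  using in_sector_fin_supp[OF flat_state_in_sector] .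

lemma no_double_occ_flat_state: "no_double_occ (flat_state k)"
  by (induction k)
    (simp_all add: flat_state_0 flat_state_Suc no_double_occ_Sminus
      no_double_occ_sector_0[OF up_product_in_sector])

lemma Splus_flat_state:
  "Stot M B Splus (flat_state (Suc k)) = (\<lambda>S. of_nat (Suc k) * (of_nat (card M) - of_nat k) * flat_state k S)"
proof (induction k)
  case 0
  show ?case
    using Splus_Sminus_comm[OF fin_supp_flat_state finite_Lam, of 0]
      Splus_tot_sector_0[OF up_product_in_sector] S3_tot_in_sector[OF flat_state_in_sector, of 0]
    by (simp add: flat_state_Suc flat_state_0 Sminus_tot_linear fun_eq_iff mult.commute)
next
  case (Suc k)
  show ?case
  proof
    fix S
    have "Stot M B Splus (flat_state (Suc (Suc k))) S
        = Stot M B Sminus (Stot M B Splus (flat_state (Suc k))) S + 2 * Stot M B S3 (flat_state (Suc k)) S"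
      unfolding flat_state_Suc[of "Suc k"] by (rule Splus_Sminus_comm[OF fin_supp_flat_state finite_Lam])
    also have "\<dots> = of_nat (Suc k) * (of_nat (card M) - of_nat k) * flat_state (Suc k) S
        + 2 * ((of_nat (card M) / 2 - of_nat (Suc k)) * flat_state (Suc k) S)"
      unfolding Suc.IH S3_tot_in_sector[OF flat_state_in_sector]
      by (simp add: Sminus_tot_linear flat_state_Suc)
    finally show "Stot M B Splus (flat_state (Suc (Suc k))) S
        = of_nat (Suc (Suc k)) * (of_nat (card M) - of_nat (Suc k)) * flat_state (Suc k) S"
      by (simp add: algebra_simps)
  qed
qed

lemma flat_state_nonzero: "k \<le> card M \<Longrightarrow> flat_state k \<noteq> (\<lambda>S. 0)"
proof (induction k)
  case 0
  show ?case using up_product_nonzero[of "sorted_list_of_set M"] finite_M by (simp add: flat_state_0)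
next
  case (Suc k)
  show ?case
  proof
    assume "flat_state (Suc k) = (\<lambda>S. 0)"
    then have "Stot M B Splus (flat_state (Suc k)) = (\<lambda>S. 0)" by (simp add: Splus_tot_linear)
    then have "\<forall>S. of_nat (Suc k) * (of_nat (card M) - of_nat k) * flat_state k S = (0::complex)"
      unfolding Splus_flat_state by metis
    moreover have "(of_nat (card M) - of_nat k :: complex) \<noteq> 0" using Suc.prems by simp
    ultimately have "flat_state k = (\<lambda>S. 0)" by (auto simp: fun_eq_iff simp del: of_nat_Suc)
    then show False using Suc by simp
  qed
qed

lemma Stot_sq_flat_state:
  "Stot_sq M B (flat_state k)
    = (\<lambda>S. complex_of_real ((real (card M) / 2) * (real (card M) / 2 + 1)) * flat_state k S)"
proof
  fix S
  have lowered: "Stot M B Splus (Stot M B Sminus (flat_state k)) S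
      = of_nat (Suc k) * (of_nat (card M) - of_nat k) * flat_state k S"
    by (simp add: flat_state_Suc[symmetric] Splus_flat_state)
  have raised: "Stot M B Sminus (Stot M B Splus (flat_state k)) S
      = of_nat k * (of_nat (card M) - of_nat k + 1) * flat_state k S"
  proof (cases k)
    case 0
    then show ?thesis
      by (simp add: flat_state_0 Splus_tot_sector_0[OF up_product_in_sector] Sminus_tot_linear)
  next
    case (Suc j)
    then show ?thesis
      by (simp add: Splus_flat_state Sminus_tot_linear flat_state_Suc[symmetric] algebra_simps)
  qed
  have S3: "Stot M B S3 (flat_state k) = (\<lambda>S. (of_nat (card M) / 2 - of_nat k) * flat_state k S)"
    by (rule ext) (rule S3_tot_in_sector[OF flat_state_in_sector])
  then have S3_sq: "Stot M B S3 (Stot M B S3 (flat_state k)) S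
      = (of_nat (card M) / 2 - of_nat k)^2 * flat_state k S"
    by (simp add: S3_tot_linear power2_eq_square)
  show "Stot_sq M B (flat_state k) S
      = complex_of_real ((real (card M) / 2) * (real (card M) / 2 + 1)) * flat_state k S"
    unfolding Stot_sq_ladder lowered raised S3_sq by (simp add: field_simps power2_eq_square)
qed

definition hopping :: "'a vec \<Rightarrow> 'a vec" where
  "hopping \<psi> = (\<lambda>S. \<Sum>e\<in>Edg B. \<Sum>\<sigma>\<in>(UNIV::bool set).
      creL M B (acoef B zeta mu (fst e)) \<sigma> (annL M B (acoef B zeta mu (snd e)) \<sigma> \<psi>) S)"

lemma linear_op_hopping: "linear_op hopping"
  unfolding hopping_def[abs_def]
  by (intro linear_op_sum_ops linear_op_comp[OF linear_op_creL linear_op_annL])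

lemma Sminus_hopping_term_comm:
  assumes "fin_supp \<psi>"
  shows "(\<Sum>\<sigma>\<in>(UNIV::bool set). Stot M B Sminus (creL M B w \<sigma> (annL M B w' \<sigma> \<psi>)) S)
       = (\<Sum>\<sigma>\<in>(UNIV::bool set). creL M B w \<sigma> (annL M B w' \<sigma> (Stot M B Sminus \<psi>)) S)"
proof -
  have up: "Stot M B Sminus (annL M B w' True \<psi>) = annL M B w' True (Stot M B Sminus \<psi>)"
    and down: "Stot M B Sminus (annL M B w' False \<psi>)
      = (\<lambda>S. annL M B w' False (Stot M B Sminus \<psi>) S - annL M B w' True \<psi> S)"
    by (rule ext, simp add: Sminus_annL_comm[OF assms finite_Lam])+
  have "Stot M B Sminus (creL M B w True (annL M B w' True \<psi>)) S
     = creL M B w False (annL M B w' True \<psi>) S + creL M B w True (annL M B w' True (Stot M B Sminus \<psi>)) S"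
    using Sminus_creL_comm[OF fin_supp_annL[OF assms] finite_Lam] by (simp add: up)
  moreover have "Stot M B Sminus (creL M B w False (annL M B w' False \<psi>)) S
     = creL M B w False (annL M B w' False (Stot M B Sminus \<psi>)) S - creL M B w False (annL M B w' True \<psi>) S"
    using Sminus_creL_comm[OF fin_supp_annL[OF assms] finite_Lam] by (simp add: down creL_linear)
  ultimately show ?thesis by (simp add: UNIV_bool)
qed

lemma hopping_Sminus_comm:
  "fin_supp \<psi> \<Longrightarrow> hopping (Stot M B Sminus \<psi>) = Stot M B Sminus (hopping \<psi>)"
  unfolding hopping_def by (rule ext) (simp add: Sminus_tot_linear Sminus_hopping_term_comm)

lemma hopping_flat_state: "hopping (flat_state k) = (\<lambda>S. 0)"
proof (induction k)
  case 0
  have "creL M B (acoef B zeta mu x) \<sigma> (annL M B (acoef B zeta mu y) \<sigma> (flat_state 0)) = (\<lambda>S. 0)"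
    if "(x,y) \<in> Edg B" for x y \<sigma>
  proof (cases \<sigma>)
    case True
    have "x \<in> M" "x \<noteq> y" using that bond_sites by (auto simp: Edg_def)
    then show ?thesis
      using True finite_M creL_annL_up_product[of "sorted_list_of_set M" x y] by (simp add: flat_state_0)
  next
    case False
    then show ?thesis
      by (simp add: flat_state_0 annL_def ann_down_sector_0[OF up_product_in_sector] creL_linear)
  qed
  then show ?case unfolding hopping_def by (simp add: case_prod_beta)
qed (simp add: flat_state_Suc hopping_Sminus_comm[OF fin_supp_flat_state] Sminus_tot_linear)

lemma annL_b_flat_state:
  assumes "v \<in> Osites B \<union> OBsites B"
  shows "annL M B (bcoef mu v) \<sigma> (flat_state k) = (\<lambda>S. 0)"
proof (induction k arbitrary: \<sigma>)
  case 0
  show ?case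
    using annL_b_up_product[OF assms]
    by (cases \<sigma>) (simp_all add: flat_state_0 annL_def ann_down_sector_0[OF up_product_in_sector])
next
  case (Suc k)
  show ?case
    using Sminus_annL_comm[OF fin_supp_flat_state finite_Lam, of "bcoef mu v" \<sigma> k] Suc.IH
    by (simp add: flat_state_Suc Sminus_tot_linear fun_eq_iff)
qed

definition b_energy :: "'a vec \<Rightarrow> real" where
  "b_energy \<Phi> = (\<Sum>v\<in>Osites B \<union> OBsites B. \<Sum>\<sigma>\<in>(UNIV::bool set). norm_sq M B (annL M B (bcoef mu v) \<sigma> \<Phi>))"

definition double_occ_energy :: "'a vec \<Rightarrow> real" where
  "double_occ_energy \<Phi> = (\<Sum>z\<in>Lam M B. \<Sum>S\<in>Pow (modes M B).
     if (z,True) \<in> S \<and> (z,False) \<in> S then (cmod (\<Phi> S))\<^sup>2 else 0)"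

lemma energy_decomp:
  "energy M B zeta mu t s U \<Phi>
    = t * Re (inner_F M B \<Phi> (hopping \<Phi>)) + s * b_energy \<Phi> + U * double_occ_energy \<Phi>"
proof -
  have ham: "ham M B zeta mu t s U \<Phi> = (\<lambda>S. complex_of_real t * hopping \<Phi> S
      + complex_of_real s * (\<Sum>v\<in>Osites B \<union> OBsites B. \<Sum>\<sigma>\<in>(UNIV::bool set).
          creL M B (bcoef mu v) \<sigma> (annL M B (bcoef mu v) \<sigma> \<Phi>) S)
      + complex_of_real U * (\<Sum>z\<in>Lam M B. nop (z, True) (nop (z, False) \<Phi>) S))"
    unfolding ham_def hopping_def by (simp add: case_prod_beta)
  have b_term: "inner_F M B \<Phi> (creL M B (bcoef mu v) \<sigma> (annL M B (bcoef mu v) \<sigma> \<Phi>))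
      = complex_of_real (norm_sq M B (annL M B (bcoef mu v) \<sigma> \<Phi>))" for v \<sigma>
    by (simp add: inner_F_creL_adjoint[OF finite_modes] inner_F_self)
  have U_term: "inner_F M B \<Phi> (nop (z, True) (nop (z, False) \<Phi>)) = complex_of_real
      (\<Sum>S\<in>Pow (modes M B). if (z,True) \<in> S \<and> (z,False) \<in> S then (cmod (\<Phi> S))\<^sup>2 else 0)" for z
    unfolding inner_F_def nop_apply of_real_sum
    by (intro sum.cong refl) (auto simp: complex_norm_square mult.commute simp del: of_real_power)
  have "inner_F M B \<Phi> (ham M B zeta mu t s U \<Phi>)
      = complex_of_real t * inner_F M B \<Phi> (hopping \<Phi>)
        + complex_of_real s * complex_of_real (b_energy \<Phi>) + complex_of_real U * complex_of_real (double_occ_energy \<Phi>)"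
    unfolding ham inner_F_add inner_F_cmult inner_F_sum b_term U_term b_energy_def
      double_occ_energy_def of_real_sum
    by simp
  then show ?thesis unfolding energy_def by simp
qed

lemma lim_energy_is_iff:
  "lim_energy_is M B zeta mu t \<Phi> E
    \<longleftrightarrow> double_occ_energy \<Phi> = 0 \<and> b_energy \<Phi> = 0 \<and> E = t * Re (inner_F M B \<Phi> (hopping \<Phi>))"
  (is "_ \<longleftrightarrow> ?D = 0 \<and> ?B = 0 \<and> E = ?T")
proof
  assume "lim_energy_is M B zeta mu t \<Phi> E"
  then obtain g where ev: "\<forall>\<^sub>F s in at_top. ((\<lambda>U. (?T + s * ?B) + U * ?D) \<longlongrightarrow> g s) at_top"
    and g: "(g \<longlongrightarrow> E) at_top"
    unfolding lim_energy_is_def energy_decomp by blast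
  then obtain s0 where s0: "\<And>s. s \<ge> s0 \<Longrightarrow> ((\<lambda>U. (?T + s * ?B) + U * ?D) \<longlongrightarrow> g s) at_top"
    unfolding eventually_at_top_linorder by blast
  have D: "?D = 0" using tendsto_affine_at_top[OF s0[OF order_refl]] by simp
  have "g s = ?T + s * ?B" if "s \<ge> s0" for s
    using tendsto_affine_at_top[OF s0[OF that]] by simp
  then have "\<forall>\<^sub>F s in at_top. ?T + s * ?B = g s"
    unfolding eventually_at_top_linorder by (metis (no_types))
  then have "((\<lambda>s. ?T + s * ?B) \<longlongrightarrow> E) at_top"
    using g by (rule tendsto_cong[THEN iffD2])
  with D show "?D = 0 \<and> ?B = 0 \<and> E = ?T" using tendsto_affine_at_top by simp
next
  assume "?D = 0 \<and> ?B = 0 \<and> E = ?T"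
  then show "lim_energy_is M B zeta mu t \<Phi> E"
    unfolding lim_energy_is_def energy_decomp by (intro exI[where x = "\<lambda>s. ?T"]) simp
qed


lemma finite_energy_iff: "finite_energy M B zeta mu t \<Phi> \<longleftrightarrow> double_occ_energy \<Phi> = 0 \<and> b_energy \<Phi> = 0"
  unfolding finite_energy_def lim_energy_is_iff by auto

lemma lim_energy_eq:
  "finite_energy M B zeta mu t \<Phi> \<Longrightarrow> lim_energy M B zeta mu t \<Phi> = t * Re (inner_F M B \<Phi> (hopping \<Phi>))"
  unfolding lim_energy_def finite_energy_iff by (rule the_equality) (simp_all add: lim_energy_is_iff)

definition b_annihilated :: "'a vec \<Rightarrow> bool" where
  "b_annihilated \<Phi> \<longleftrightarrow> (\<forall>v\<in>Osites B \<union> OBsites B. \<forall>\<sigma>. annL M B (bcoef mu v) \<sigma> \<Phi> = (\<lambda>S. 0))"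

lemma annL_outside_modes:
  assumes "Ne_space M B N \<Phi>" and "\<not> S \<subseteq> modes M B"
  shows "annL M B w \<sigma> \<Phi> S = 0"
proof -
  have "\<Phi> (insert m S) = 0" for m
    using assms unfolding Ne_space_def by (meson subset_insertI subset_trans)
  then have "ann m \<Phi> S = 0" for m by (simp add: ann_def)
  then show ?thesis by (simp add: annL_def)
qed

lemma double_occ_energy_eq_0_iff:
  assumes "Ne_space M B N \<Phi>"
  shows "double_occ_energy \<Phi> = 0 \<longleftrightarrow> no_double_occ \<Phi>"
proof -
  have "double_occ_energy \<Phi> = 0 \<longleftrightarrow> (\<forall>z\<in>Lam M B. \<forall>S\<in>Pow (modes M B).
      (if (z,True) \<in> S \<and> (z,False) \<in> S then (cmod (\<Phi> S))\<^sup>2 else 0) = 0)"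
    unfolding double_occ_energy_def using finite_Lam finite_modes
    by (simp add: sum_nonneg_eq_0_iff sum_nonneg)
  also have "\<dots> \<longleftrightarrow> no_double_occ \<Phi>"
  proof
    assume zero: "\<forall>z\<in>Lam M B. \<forall>S\<in>Pow (modes M B).
      (if (z,True) \<in> S \<and> (z,False) \<in> S then (cmod (\<Phi> S))\<^sup>2 else 0) = 0"
    show "no_double_occ \<Phi>"
      unfolding no_double_occ_def
    proof (intro allI impI)
      fix S :: "'a mode set" and z assume zS: "(z,True) \<in> S \<and> (z,False) \<in> S"
      show "\<Phi> S = 0"
      proof (rule ccontr)
        assume "\<Phi> S \<noteq> 0"
        then have "S \<subseteq> modes M B" using assms unfolding Ne_space_def by blast
        then have "z \<in> Lam M B" using zS by auto
        then have "(cmod (\<Phi> S))\<^sup>2 = 0" using zero \<open>S \<subseteq> modes M B\<close> zS by (metis PowI)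
        then show False using \<open>\<Phi> S \<noteq> 0\<close> by simp
      qed
    qed
  qed (auto simp: no_double_occ_def)
  finally show ?thesis .
qed

lemma b_energy_eq_0_iff:
  assumes "Ne_space M B N \<Phi>"
  shows "b_energy \<Phi> = 0 \<longleftrightarrow> b_annihilated \<Phi>"
proof -
  have "finite (Osites B \<union> OBsites B)" using finite_B by (simp add: Osites_def OBsites_def)
  then have "b_energy \<Phi> = 0 \<longleftrightarrow>
      (\<forall>v\<in>Osites B \<union> OBsites B. \<forall>\<sigma>. norm_sq M B (annL M B (bcoef mu v) \<sigma> \<Phi>) = 0)"
    unfolding b_energy_def by (simp add: sum_nonneg_eq_0_iff sum_nonneg norm_sq_nonneg)
  also have "\<dots> \<longleftrightarrow> b_annihilated \<Phi>"
    unfolding b_annihilated_def norm_sq_eq_0_iff[OF finite_modes] fun_eq_iff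
    using annL_outside_modes[OF assms] by metis
  finally show ?thesis .
qed

lemma finite_energy_iff_constraints:
  "Ne_space M B N \<Phi> \<Longrightarrow> finite_energy M B zeta mu t \<Phi> \<longleftrightarrow> no_double_occ \<Phi> \<and> b_annihilated \<Phi>"
  by (simp add: finite_energy_iff double_occ_energy_eq_0_iff b_energy_eq_0_iff)

definition finite_energy_state :: "'a vec \<Rightarrow> bool" where
  "finite_energy_state \<Phi> \<longleftrightarrow> Ne_space M B (card M) \<Phi> \<and> no_double_occ \<Phi> \<and> b_annihilated \<Phi>"

lemma finite_energy_state_iff:
  "finite_energy_state \<Phi> \<longleftrightarrow> Ne_space M B (card M) \<Phi> \<and> finite_energy M B zeta mu t \<Phi>"
  unfolding finite_energy_state_def using finite_energy_iff_constraints by blast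

lemma b_relation_OS:
  assumes "b_annihilated \<Phi>" and "(x,y) \<in> B"
  shows "ann (OS x y, \<rho>) \<Phi> S = mu * (ann (MS x, \<rho>) \<Phi> S + ann (MS y, \<rho>) \<Phi> S)"
proof -
  have "{OS x y, MS x, MS y} \<subseteq> Lam M B"
    using assms(2) bond_sites by (auto simp: OS_in_Lam MS_in_Lam_iff)
  then have "annL M B (bcoef mu (OS x y)) \<rho> \<Phi> S
      = (\<Sum>z\<in>{OS x y, MS x, MS y}. bcoef mu (OS x y) z * ann (z,\<rho>) \<Phi> S)"
    unfolding annL_def by (rule sum_Lam_restrict) (auto simp: bcoef_def split: site.splits)
  also have "\<dots> = ann (OS x y, \<rho>) \<Phi> S - mu * ann (MS x, \<rho>) \<Phi> S - mu * ann (MS y, \<rho>) \<Phi> S"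
    using bond_sites[OF assms(2)] by (auto simp: bcoef_def)
  moreover have "OS x y \<in> Osites B" using assms(2) by (force simp: Osites_def)
  then have "annL M B (bcoef mu (OS x y)) \<rho> \<Phi> S = 0"
    using assms(1) unfolding b_annihilated_def by simp
  ultimately show ?thesis by (simp add: algebra_simps)
qed

lemma b_relation_OB:
  assumes "b_annihilated \<Phi>" and "(x,y) \<in> B"
  shows "ann (OB x y, \<rho>) \<Phi> S = mu * (ann (MS y, \<rho>) \<Phi> S - ann (MS x, \<rho>) \<Phi> S)"
proof -
  have "{OB x y, MS x, MS y} \<subseteq> Lam M B"
    using assms(2) bond_sites by (auto simp: OB_in_Lam MS_in_Lam_iff)
  then have "annL M B (bcoef mu (OB x y)) \<rho> \<Phi> S
      = (\<Sum>z\<in>{OB x y, MS x, MS y}. bcoef mu (OB x y) z * ann (z,\<rho>) \<Phi> S)"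
    unfolding annL_def by (rule sum_Lam_restrict) (auto simp: bcoef_def split: site.splits)
  also have "\<dots> = ann (OB x y, \<rho>) \<Phi> S + mu * ann (MS x, \<rho>) \<Phi> S - mu * ann (MS y, \<rho>) \<Phi> S"
    using bond_sites[OF assms(2)] by (auto simp: bcoef_def)
  moreover have "OB x y \<in> OBsites B" using assms(2) by (force simp: OBsites_def)
  then have "annL M B (bcoef mu (OB x y)) \<rho> \<Phi> S = 0"
    using assms(1) unfolding b_annihilated_def by simp
  ultimately show ?thesis by (simp add: algebra_simps)
qed

subsection \<open>A finite-energy state is determined by its spin-configuration amplitudes\<close>

definition spin_config :: "('a \<Rightarrow> bool) \<Rightarrow> 'a mode set" where
  "spin_config \<sigma> = (\<lambda>x. (MS x, \<sigma> x)) ` M"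

lemma card_spin_config: "card (spin_config \<sigma>) = card M"
  unfolding spin_config_def by (rule card_image) (auto simp: inj_on_def)

lemma spin_config_cong: "(\<And>x. x \<in> M \<Longrightarrow> \<sigma> x = \<tau> x) \<Longrightarrow> spin_config \<sigma> = spin_config \<tau>"
  unfolding spin_config_def by (rule image_cong) auto

lemma down_count_spin_config: "down_count (spin_config \<sigma>) = card {x\<in>M. \<not> \<sigma> x}"
proof -
  have "{m \<in> spin_config \<sigma>. \<not> snd m} = (\<lambda>x. (MS x, \<sigma> x)) ` {x\<in>M. \<not> \<sigma> x}"
    by (auto simp: spin_config_def)
  then show ?thesis unfolding down_count_def by (simp add: card_image inj_on_def)
qed

definition bond_count :: "'a mode set \<Rightarrow> nat" where
  "bond_count S = card {m\<in>S. fst m \<notin> range MS}"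

lemma spin_config_of_bond_free:
  assumes "finite_energy_state \<Phi>" and "\<Phi> S \<noteq> 0" and "bond_count S = 0"
  shows "\<exists>\<sigma>. S = spin_config \<sigma>"
proof -
  have S: "S \<subseteq> modes M B" "card S = card M"
    using assms(1,2) unfolding finite_energy_state_def Ne_space_def by auto
  have "finite S" using S(1) finite_modes finite_subset by blast
  then have "{m\<in>S. fst m \<notin> range MS} = {}"
    using assms(3) unfolding bond_count_def by simp
  then have M_sites: "fst m \<in> range MS" if "m \<in> S" for m
    using that by blast
  define \<sigma> where "\<sigma> x = ((MS x,True) \<in> S)" for x
  have "S \<subseteq> spin_config \<sigma>"
  proof
    fix m assume m: "m \<in> S"
    then obtain x b where xb: "m = (MS x, b)" using M_sites by (metis imageE prod.collapse)
    then have x: "x \<in> M" using m S(1) by (auto simp: MS_in_Lam_iff)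
    have "b = \<sigma> x"
      using no_double_occ_vanishes[of \<Phi> "MS x" True S False] assms(1,2) m xb
      by (cases b) (auto simp: \<sigma>_def finite_energy_state_def)
    then show "m \<in> spin_config \<sigma>" using xb x by (auto simp: spin_config_def)
  qed
  moreover have "finite (spin_config \<sigma>)" by (simp add: spin_config_def finite_M)
  ultimately have "S = spin_config \<sigma>" using card_subset_eq S(2) card_spin_config by metis
  then show ?thesis by blast
qed

text \<open>Removing an electron from a bond site lowers \<open>bond_count\<close>; the relation for that site
  expresses the amplitude through amplitudes with the electron moved to an end of the bond.\<close>

lemma vanishes_by_bond_count:
  assumes fe: "finite_energy_state \<Phi>" and zero: "\<forall>\<sigma>. \<Phi> (spin_config \<sigma>) = 0"
  shows "S \<subseteq> modes M B \<Longrightarrow> bond_count S = n \<Longrightarrow> \<Phi> S = 0"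
proof (induction n arbitrary: S)
  case 0
  then show ?case using spin_config_of_bond_free[OF fe] zero by metis
next
  case (Suc n)
  have fin: "finite S" using Suc.prems(1) finite_modes finite_subset by blast
  obtain v \<rho> where v: "(v,\<rho>) \<in> S" "v \<notin> range MS"
    using Suc.prems(2) unfolding bond_count_def by (metis (mono_tags, lifting) card.empty
        empty_Collect_eq nat.distinct(1) prod.collapse)
  define S0 where "S0 = S - {(v,\<rho>)}"
  have S0: "(v,\<rho>) \<notin> S0" "insert (v,\<rho>) S0 = S" using v(1) by (auto simp: S0_def)
  have "\<Phi> (insert (MS p, r) S0) = 0" if "p \<in> M" for p r
  proof (rule Suc.IH)
    show "insert (MS p, r) S0 \<subseteq> modes M B"
      using Suc.prems(1) that by (auto simp: S0_def MS_in_Lam_iff)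
    have "{m\<in>insert (MS p, r) S0. fst m \<notin> range MS} = {m\<in>S. fst m \<notin> range MS} - {(v,\<rho>)}"
      by (auto simp: S0_def)
    then show "bond_count (insert (MS p, r) S0) = n"
      using Suc.prems(2) fin v unfolding bond_count_def by simp
  qed
  then have M_ann: "ann (MS p, r) \<Phi> S0 = 0" if "p \<in> M" for p r
    using that by (simp add: ann_def)
  obtain x y where xy: "(x,y) \<in> B" and "v = OS x y \<or> v = OB x y"
  proof -
    have "v \<in> Lam M B" using v(1) Suc.prems(1) by auto
    then show ?thesis using v(2) that by (auto simp: Lam_def Osites_def OBsites_def)
  qed
  then have "ann (v,\<rho>) \<Phi> S0 = 0"
    using b_relation_OS[of \<Phi> x y \<rho> S0] b_relation_OB[of \<Phi> x y \<rho> S0] fe bond_sites[OF xy] M_ann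
    by (auto simp: finite_energy_state_def)
  then show ?case using S0 by (simp add: ann_eq_0_iff)
qed

lemma finite_energy_state_eq_0:
  assumes "finite_energy_state \<Phi>" and "\<forall>\<sigma>. \<Phi> (spin_config \<sigma>) = 0"
  shows "\<Phi> = (\<lambda>S. 0)"
proof
  fix S
  show "\<Phi> S = 0"
  proof (cases "S \<subseteq> modes M B")
    case True
    then show ?thesis using vanishes_by_bond_count[OF assms] by blast
  next
    case False
    then show ?thesis using assms(1) unfolding finite_energy_state_def Ne_space_def by blast
  qed
qed

definition swap_spins :: "'a \<Rightarrow> 'a \<Rightarrow> ('a \<Rightarrow> bool) \<Rightarrow> 'a \<Rightarrow> bool" where
  "swap_spins x y \<sigma> = \<sigma>(x := \<sigma> y, y := \<sigma> x)"

lemma swap_spins_same [simp]: "swap_spins x x \<sigma> = \<sigma>"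
  and swap_spins_commute: "swap_spins x y \<sigma> = swap_spins y x \<sigma>"
  and swap_spins_swap_spins [simp]: "swap_spins x y (swap_spins x y \<sigma>) = \<sigma>"
  by (auto simp: swap_spins_def fun_eq_iff)

lemma swap_spins_conj:
  "x \<noteq> y \<Longrightarrow> y \<noteq> z \<Longrightarrow> x \<noteq> z \<Longrightarrow> swap_spins x z \<sigma> = swap_spins x y (swap_spins y z (swap_spins x y \<sigma>))"
  by (auto simp: swap_spins_def fun_eq_iff)

text \<open>With \<open>u = u(x,y)\<close>, \<open>\<alpha> = \<sigma> x \<noteq> \<beta> = \<sigma> y\<close> and \<open>R\<close> the rest of the configuration, the
  relations for \<open>b\<^sub>u\<^sub>\<beta>\<close>, \<open>b\<^sub>u\<^sub>\<alpha>\<close>, \<open>b\<^sub>u\<^sub>\<beta>\<close> successively kill the amplitudes of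
  \<open>{u\<beta>, x\<alpha>} \<union> R\<close>, \<open>{u\<beta>, y\<alpha>} \<union> R\<close> and \<open>{x\<beta>, y\<alpha>} \<union> R\<close>, using that no site
  is doubly occupied.\<close>

lemma swap_spins_bond:
  assumes fe: "finite_energy_state \<Phi>" and xy: "(x,y) \<in> B" and zero: "\<Phi> (spin_config \<sigma>) = 0"
  shows "\<Phi> (spin_config (swap_spins x y \<sigma>)) = 0"
proof (cases "\<sigma> x = \<sigma> y")
  case True
  then have "swap_spins x y \<sigma> = \<sigma>" by (auto simp: swap_spins_def fun_eq_iff)
  then show ?thesis using zero by simp
next
  case False
  have D: "no_double_occ \<Phi>" and Bc: "b_annihilated \<Phi>"
    using fe by (auto simp: finite_energy_state_def)
  have x: "x \<in> M" and y: "y \<in> M" and "x \<noteq> y" using bond_sites[OF xy] by auto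
  define \<alpha> \<beta> u where "\<alpha> = \<sigma> x" and "\<beta> = \<sigma> y" and "u = OS x y"
  have "\<alpha> \<noteq> \<beta>" using False by (simp add: \<alpha>_def \<beta>_def)
  define R where "R = (\<lambda>z. (MS z, \<sigma> z)) ` (M - {x,y})"
  have R: "(u,r) \<notin> R" "(MS x,r) \<notin> R" "(MS y,r) \<notin> R" for r by (auto simp: R_def u_def)
  have M_split: "M = insert x (insert y (M - {x,y}))" using x y by auto
  have "spin_config \<sigma> = insert (MS x,\<alpha>) (insert (MS y,\<beta>) R)"
    unfolding spin_config_def by (subst M_split) (simp add: R_def \<alpha>_def \<beta>_def)
  moreover have "spin_config (swap_spins x y \<sigma>) = insert (MS x,\<beta>) (insert (MS y,\<alpha>) R)"
    unfolding spin_config_def R_def swap_spins_def using \<open>x \<noteq> y\<close>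
    by (subst M_split) (auto simp: \<alpha>_def \<beta>_def intro!: image_cong)
  ultimately have "ann (MS y,\<beta>) \<Phi> (insert (MS x,\<alpha>) R) = 0"
    using zero R \<open>x \<noteq> y\<close> by (simp add: ann_eq_0_iff insert_commute)
  moreover have "ann (MS x,\<beta>) \<Phi> (insert (MS x,\<alpha>) R) = 0"
    using no_double_occ_vanishes[OF D, of "MS x" \<beta> _ \<alpha>] \<open>\<alpha> \<noteq> \<beta>\<close> R
    by (simp add: ann_eq_0_iff)
  ultimately have "ann (u,\<beta>) \<Phi> (insert (MS x,\<alpha>) R) = 0"
    using b_relation_OS[OF Bc xy] by (simp add: u_def)
  then have step1: "\<Phi> (insert (MS x,\<alpha>) (insert (u,\<beta>) R)) = 0"
    using R by (simp add: ann_eq_0_iff u_def insert_commute)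
  have "ann (u,\<alpha>) \<Phi> (insert (u,\<beta>) R) = 0"
    using no_double_occ_vanishes[OF D, of u \<alpha> _ \<beta>] \<open>\<alpha> \<noteq> \<beta>\<close> R by (simp add: ann_eq_0_iff)
  moreover have "ann (MS x,\<alpha>) \<Phi> (insert (u,\<beta>) R) = 0"
    using step1 R by (simp add: ann_eq_0_iff u_def)
  ultimately have "ann (MS y,\<alpha>) \<Phi> (insert (u,\<beta>) R) = 0"
    using b_relation_OS[OF Bc xy] mu_pos by (simp add: u_def)
  then have step2: "\<Phi> (insert (u,\<beta>) (insert (MS y,\<alpha>) R)) = 0"
    using R by (simp add: ann_eq_0_iff u_def insert_commute)
  have "ann (u,\<beta>) \<Phi> (insert (MS y,\<alpha>) R) = 0"
    using step2 R by (simp add: ann_eq_0_iff u_def)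
  moreover have "ann (MS y,\<beta>) \<Phi> (insert (MS y,\<alpha>) R) = 0"
    using no_double_occ_vanishes[OF D, of "MS y" \<beta> _ \<alpha>] \<open>\<alpha> \<noteq> \<beta>\<close> R
    by (simp add: ann_eq_0_iff)
  ultimately have "ann (MS x,\<beta>) \<Phi> (insert (MS y,\<alpha>) R) = 0"
    using b_relation_OS[OF Bc xy] mu_pos by (simp add: u_def)
  then show ?thesis
    using \<open>spin_config (swap_spins x y \<sigma>) = _\<close> R \<open>x \<noteq> y\<close> by (simp add: ann_eq_0_iff)
qed

lemma swap_spins_edge:
  assumes "finite_energy_state \<Phi>" and e: "(x,y) \<in> Edg B" and "\<Phi> (spin_config \<sigma>) = 0"
  shows "\<Phi> (spin_config (swap_spins x y \<sigma>)) = 0"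
proof -
  from e consider "(x,y) \<in> B" | "(y,x) \<in> B" by (auto simp: Edg_def)
  then show ?thesis
    using swap_spins_bond[OF assms(1) _ assms(3)] swap_spins_commute[of x y \<sigma>] by cases metis+
qed

lemma swap_spins_connected:
  assumes fe: "finite_energy_state \<Phi>" and "(x,y) \<in> (Edg B)\<^sup>*"
  shows "\<Phi> (spin_config \<sigma>) = 0 \<Longrightarrow> \<Phi> (spin_config (swap_spins x y \<sigma>)) = 0"
  using assms(2)
proof (induction arbitrary: \<sigma> rule: rtrancl_induct)
  case (step y z)
  consider "x = z" | "y = x" | "y = z" | "x \<noteq> y" "y \<noteq> z" "x \<noteq> z" by blast
  then show ?case
  proof cases
    case 4
    have "\<Phi> (spin_config (swap_spins x y (swap_spins y z (swap_spins x y \<sigma>)))) = 0"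
      using step swap_spins_edge[OF fe step(2)] by blast
    then show ?thesis using swap_spins_conj[OF 4] by simp
  qed (use step swap_spins_edge[OF fe step(2)] in auto)
qed simp

definition down_sites :: "('a \<Rightarrow> bool) \<Rightarrow> 'a set" where
  "down_sites \<sigma> = {x\<in>M. \<not> \<sigma> x}"

lemma vanishes_same_down_count:
  assumes fe: "finite_energy_state \<Phi>" and zero: "\<Phi> (spin_config \<tau>) = 0"
  shows "card (down_sites \<sigma>) = card (down_sites \<tau>) \<Longrightarrow> \<Phi> (spin_config \<sigma>) = 0"
proof (induction "card (down_sites \<sigma> - down_sites \<tau>)" arbitrary: \<sigma> rule: less_induct)
  case less
  have fin: "finite (down_sites \<rho>)" for \<rho> using finite_M by (simp add: down_sites_def)
  show ?case
  proof (cases "down_sites \<sigma> \<subseteq> down_sites \<tau>")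
    case True
    then have "down_sites \<sigma> = down_sites \<tau>" using less.prems fin card_subset_eq by metis
    then have "spin_config \<sigma> = spin_config \<tau>"
      by (intro spin_config_cong) (auto simp: down_sites_def set_eq_iff)
    then show ?thesis using zero by simp
  next
    case False
    then obtain p where p: "p \<in> down_sites \<sigma>" "p \<notin> down_sites \<tau>" by auto
    have "\<not> down_sites \<tau> \<subseteq> down_sites \<sigma>"
      using less.prems fin card_subset_eq p by metis
    then obtain q where q: "q \<in> down_sites \<tau>" "q \<notin> down_sites \<sigma>" by auto
    have pq: "p \<in> M" "q \<in> M" "p \<noteq> q" using p q by (auto simp: down_sites_def)
    define \<sigma>' where "\<sigma>' = swap_spins p q \<sigma>"
    have D': "down_sites \<sigma>' = insert q (down_sites \<sigma> - {p})"
      using p q by (auto simp: down_sites_def \<sigma>'_def swap_spins_def)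
    then have "card (down_sites \<sigma>') = card (down_sites \<sigma>)"
      using fin p(1) q(2) card_Suc_Diff1[of "down_sites \<sigma>" p] by simp
    moreover have "down_sites \<sigma>' - down_sites \<tau> = (down_sites \<sigma> - down_sites \<tau>) - {p}"
      using D' q(1) by auto
    then have "card (down_sites \<sigma>' - down_sites \<tau>) < card (down_sites \<sigma> - down_sites \<tau>)"
      using p fin card_Diff1_less[of "down_sites \<sigma> - down_sites \<tau>" p] by simp
    ultimately have "\<Phi> (spin_config \<sigma>') = 0" using less by simp
    then have "\<Phi> (spin_config (swap_spins p q \<sigma>')) = 0"
      using swap_spins_connected[OF fe] connected pq by blast
    then show ?thesis by (simp add: \<sigma>'_def)
  qed
qed

lemma finite_energy_state_flat_state: "finite_energy_state (flat_state k)"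
  unfolding finite_energy_state_def b_annihilated_def
  using flat_state_in_sector[of k] no_double_occ_flat_state annL_b_flat_state
  by (auto simp: in_sector_def Ne_space_def)

lemma finite_energy_state_lincomb:
  assumes fe: "\<And>k. k \<in> I \<Longrightarrow> finite_energy_state (f k)"
  shows "finite_energy_state (\<lambda>S. \<Sum>k\<in>I. c k * f k S)"
  unfolding finite_energy_state_def
proof (intro conjI)
  show "Ne_space M B (card M) (\<lambda>S. \<Sum>k\<in>I. c k * f k S)"
    unfolding Ne_space_def
  proof (intro allI impI)
    fix S assume "(\<Sum>k\<in>I. c k * f k S) \<noteq> 0"
    then obtain k where "k \<in> I" "c k * f k S \<noteq> 0" by (rule sum.not_neutral_contains_not_neutral)
    then show "S \<subseteq> modes M B \<and> card S = card M"
      using fe[of k] unfolding finite_energy_state_def Ne_space_def by auto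
  qed
  have "no_double_occ (f k)" "b_annihilated (f k)" if "k \<in> I" for k
    using fe[OF that] by (simp_all add: finite_energy_state_def)
  then show "no_double_occ (\<lambda>S. \<Sum>k\<in>I. c k * f k S)" "b_annihilated (\<lambda>S. \<Sum>k\<in>I. c k * f k S)"
    unfolding no_double_occ_def b_annihilated_def by (simp_all add: annL_linear)
qed

lemma finite_energy_state_diff:
  assumes "finite_energy_state \<Phi>" and "finite_energy_state \<Psi>"
  shows "finite_energy_state (\<lambda>S. \<Phi> S - \<Psi> S)"
  using finite_energy_state_lincomb[of UNIV "\<lambda>b. if b then \<Phi> else \<Psi>" "\<lambda>b. if b then 1 else -1"] assms
  by (simp add: UNIV_bool)

definition down_set :: "nat \<Rightarrow> 'a set" where
  "down_set k = (SOME D. D \<subseteq> M \<and> card D = k)"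

lemma card_down_sites_down_set: "k \<le> card M \<Longrightarrow> card (down_sites (\<lambda>x. x \<notin> down_set k)) = k"
proof -
  assume "k \<le> card M"
  then have "\<exists>D. D \<subseteq> M \<and> card D = k" by (meson obtain_subset_with_card_n)
  then have "down_set k \<subseteq> M \<and> card (down_set k) = k"
    unfolding down_set_def by (rule someI_ex)
  moreover from this have "down_sites (\<lambda>x. x \<notin> down_set k) = down_set k"
    by (auto simp: down_sites_def)
  ultimately show ?thesis by simp
qed

lemma flat_state_spin_config:
  "flat_state k (spin_config \<sigma>) \<noteq> 0 \<Longrightarrow> card (down_sites \<sigma>) = k"
  using flat_state_in_sector[of k] down_count_spin_config[of \<sigma>]
  unfolding in_sector_def down_sites_def by metis

lemma flat_state_down_set_nonzero:
  assumes k: "k \<le> card M"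
  shows "flat_state k (spin_config (\<lambda>x. x \<notin> down_set k)) \<noteq> 0"
proof
  assume "flat_state k (spin_config (\<lambda>x. x \<notin> down_set k)) = 0"
  then have "flat_state k (spin_config \<sigma>) = 0" for \<sigma>
    using vanishes_same_down_count[OF finite_energy_state_flat_state] flat_state_spin_config
      card_down_sites_down_set[OF k] by metis
  then show False
    using finite_energy_state_eq_0[OF finite_energy_state_flat_state] flat_state_nonzero[OF k] by blast
qed

text \<open>The coefficients are read off the representative configurations, on which exactly one
  flat-band state does not vanish.\<close>

lemma finite_energy_state_flat_state_span:
  assumes fe: "finite_energy_state \<Phi>"
  shows "\<exists>c. \<Phi> = (\<lambda>S. \<Sum>k<card M + 1. c k * flat_state k S)"
proof -
  let ?rep = "\<lambda>k. spin_config (\<lambda>x. x \<notin> down_set k)"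
  define c where "c k = \<Phi> (?rep k) / flat_state k (?rep k)" for k
  define \<Psi> where "\<Psi> = (\<lambda>S. \<Phi> S - (\<Sum>k<card M + 1. c k * flat_state k S))"
  have fe\<Psi>: "finite_energy_state \<Psi>"
    unfolding \<Psi>_def
    by (rule finite_energy_state_diff[OF fe finite_energy_state_lincomb[OF finite_energy_state_flat_state]])
  have rep_zero: "\<Psi> (?rep j) = 0" if j: "j \<le> card M" for j
  proof -
    have "flat_state k (?rep j) = 0" if "k \<noteq> j" for k
      using flat_state_spin_config[of k "\<lambda>x. x \<notin> down_set j"] card_down_sites_down_set[OF j] that
      by auto
    then have "(\<Sum>k<card M + 1. c k * flat_state k (?rep j))
        = (\<Sum>k<card M + 1. if k = j then c j * flat_state j (?rep j) else 0)"
      by (intro sum.cong) auto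
    also have "\<dots> = c j * flat_state j (?rep j)" using j by simp
    finally have "(\<Sum>k<card M + 1. c k * flat_state k (?rep j)) = c j * flat_state j (?rep j)" .
    then show ?thesis using flat_state_down_set_nonzero[OF j] by (simp add: \<Psi>_def c_def)
  qed
  have "\<Psi> (spin_config \<sigma>) = 0" for \<sigma>
  proof -
    have j: "card (down_sites \<sigma>) \<le> card M"
      using finite_M by (auto simp: down_sites_def intro: card_mono)
    show ?thesis
      using vanishes_same_down_count[OF fe\<Psi> rep_zero[OF j]] card_down_sites_down_set[OF j] by simp
  qed
  then have "\<Psi> = (\<lambda>S. 0)" using finite_energy_state_eq_0[OF fe\<Psi>] by blast
  then show ?thesis unfolding \<Psi>_def by (auto simp: fun_eq_iff)
qed

lemma finite_energy_state_iff_span: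
  "finite_energy_state \<Phi> \<longleftrightarrow> (\<exists>c. \<Phi> = (\<lambda>S. \<Sum>k<card M + 1. c k * flat_state k S))"
proof
  assume "\<exists>c. \<Phi> = (\<lambda>S. \<Sum>k<card M + 1. c k * flat_state k S)"
  then obtain c where "\<Phi> = (\<lambda>S. \<Sum>k<card M + 1. c k * flat_state k S)" ..
  then show "finite_energy_state \<Phi>"
    using finite_energy_state_lincomb[OF finite_energy_state_flat_state] by (simp only:)
qed (rule finite_energy_state_flat_state_span)

lemma hopping_finite_energy_state:
  assumes "finite_energy_state \<Phi>"
  shows "hopping \<Phi> = (\<lambda>S. 0)"
proof -
  from assms obtain c where c: "\<Phi> = (\<lambda>S. \<Sum>k<card M + 1. c k * flat_state k S)"
    unfolding finite_energy_state_iff_span ..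
  show ?thesis unfolding c
    by (simp only: linear_op_sum[OF linear_op_hopping] linear_op_cmult[OF linear_op_hopping]
        hopping_flat_state) simp
qed


lemma Stot_sq_finite_energy_state:
  assumes "finite_energy_state \<Phi>"
  shows "Stot_sq M B \<Phi> = (\<lambda>S. complex_of_real ((real (card M) / 2) * (real (card M) / 2 + 1)) * \<Phi> S)"
proof -
  from assms obtain c where c: "\<Phi> = (\<lambda>S. \<Sum>k<card M + 1. c k * flat_state k S)"
    unfolding finite_energy_state_iff_span ..
  show ?thesis unfolding c
    by (simp only: linear_op_sum[OF linear_op_Stot_sq] linear_op_cmult[OF linear_op_Stot_sq]
        Stot_sq_flat_state sum_distrib_left mult.left_commute)
qed

lemma ground_state_iff:
  "ground_state M B zeta mu t (card M) \<Phi> \<longleftrightarrow> finite_energy_state \<Phi> \<and> inner_F M B \<Phi> \<Phi> = 1"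
proof -
  have "lim_energy M B zeta mu t \<Psi> = 0" if "finite_energy_state \<Psi>" for \<Psi>
    using that lim_energy_eq hopping_finite_energy_state
    by (simp add: finite_energy_state_iff inner_F_def)
  then show ?thesis unfolding ground_state_def finite_energy_state_iff by auto
qed

definition unit_flat_state :: "nat \<Rightarrow> 'a vec" where
  "unit_flat_state k = (\<lambda>S. flat_state k S / complex_of_real (sqrt (norm_sq M B (flat_state k))))"

lemma norm_sq_flat_state_pos: "k \<le> card M \<Longrightarrow> norm_sq M B (flat_state k) > 0"
  using norm_sq_nonneg[of M B "flat_state k"] norm_sq_eq_0_iff[OF finite_modes, of "flat_state k"]
    flat_state_nonzero[of k] flat_state_in_sector[of k]
  by (force simp: in_sector_def fun_eq_iff)

lemma unit_flat_state_orthonormal: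
  assumes "k < card M + 1" and "l < card M + 1"
  shows "inner_F M B (unit_flat_state k) (unit_flat_state l) = (if k = l then 1 else 0)"
proof (cases "k = l")
  case True
  have "norm_sq M B (flat_state k) > 0" using norm_sq_flat_state_pos assms(1) by simp
  then have "norm_sq M B (unit_flat_state k) = 1"
    by (simp add: unit_flat_state_def norm_sq_def norm_divide power_divide sum_divide_distrib[symmetric])
  then show ?thesis using True by (simp add: inner_F_self)
next
  case False
  have "cnj (unit_flat_state k S) * unit_flat_state l S = 0" for S
    using flat_state_in_sector[of k] flat_state_in_sector[of l] False
    unfolding unit_flat_state_def in_sector_def by auto
  then show ?thesis using False unfolding inner_F_def by (simp only: sum.neutral) simp
qed

lemma span_unit_flat_state:
  "(\<exists>c. \<Phi> = (\<lambda>S. \<Sum>k<card M + 1. c k * unit_flat_state k S))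
    \<longleftrightarrow> (\<exists>c. \<Phi> = (\<lambda>S. \<Sum>k<card M + 1. c k * flat_state k S))"
  (is "(\<exists>c. \<Phi> = ?unit c) \<longleftrightarrow> (\<exists>c. \<Phi> = ?flat c)")
proof -
  let ?n = "\<lambda>k. complex_of_real (sqrt (norm_sq M B (flat_state k)))"
  have unit: "?unit c = ?flat (\<lambda>k. c k / ?n k)" for c
    by (simp add: unit_flat_state_def)
  have flat: "?flat c = ?unit (\<lambda>k. c k * ?n k)" for c
  proof -
    have "?n k \<noteq> 0" if "k < card M + 1" for k using norm_sq_flat_state_pos[of k] that by simp
    then show ?thesis by (auto simp: unit_flat_state_def fun_eq_iff intro!: sum.cong)
  qed
  show ?thesis
  proof
    assume "\<exists>c. \<Phi> = ?unit c"
    then obtain c where "\<Phi> = ?unit c" ..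
    then show "\<exists>c. \<Phi> = ?flat c" unfolding unit by (rule exI[where x = "\<lambda>k. c k / ?n k"])
  next
    assume "\<exists>c. \<Phi> = ?flat c"
    then obtain c where "\<Phi> = ?flat c" ..
    then show "\<exists>c. \<Phi> = ?unit c" unfolding flat by (rule exI[where x = "\<lambda>k. c k * ?n k"])
  qed
qed

end

theorem theorem1:
  fixes M :: "'a::linorder set" and B :: "('a \<times> 'a) set"
    and zeta :: nat and mu t :: real
  assumes "finite M"
    and "B \<subseteq> M \<times> M"
    and "\<forall>(x,y)\<in>B. x \<noteq> y"
    and "\<forall>x y. (x,y) \<in> B \<longrightarrow> (y,x) \<notin> B"
    and "\<forall>x\<in>M. \<forall>y\<in>M. (x,y) \<in> (Edg B)\<^sup>*"
    and "\<forall>x\<in>M. card {y. (x,y) \<in> Edg B} = zeta"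
    and "mu > 0" and "t > 0"
  shows "(\<forall>\<Phi>. ground_state M B zeta mu t (card M) \<Phi> \<longrightarrow>
            Stot_sq M B \<Phi> = (\<lambda>S. complex_of_real ((real (card M) / 2) * (real (card M) / 2 + 1)) * \<Phi> S))
       \<and> (\<exists>\<phi> :: nat \<Rightarrow> 'a vec.
            (\<forall>k < card M + 1. \<forall>l < card M + 1. inner_F M B (\<phi> k) (\<phi> l) = (if k = l then 1 else 0))
          \<and> (\<forall>\<Phi>. ground_state M B zeta mu t (card M) \<Phi> \<longleftrightarrow>
                 (inner_F M B \<Phi> \<Phi> = 1 \<and> (\<exists>c. \<Phi> = (\<lambda>S. \<Sum>k < card M + 1. c k * \<phi> k S)))))"
proof -
  interpret flat_band_hubbard M B zeta mu t
    using assms by unfold_locales auto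
  have "ground_state M B zeta mu t (card M) \<Phi> \<longleftrightarrow>
      inner_F M B \<Phi> \<Phi> = 1 \<and> (\<exists>c. \<Phi> = (\<lambda>S. \<Sum>k < card M + 1. c k * unit_flat_state k S))" for \<Phi>
    unfolding ground_state_iff span_unit_flat_state finite_energy_state_iff_span by auto
  moreover have "\<forall>\<Phi>. ground_state M B zeta mu t (card M) \<Phi> \<longrightarrow>
      Stot_sq M B \<Phi> = (\<lambda>S. complex_of_real ((real (card M) / 2) * (real (card M) / 2 + 1)) * \<Phi> S)"
    by (simp add: ground_state_iff Stot_sq_finite_energy_state)
  ultimately show ?thesis using unit_flat_state_orthonormal by blast
qed

end
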